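(* Write $\dfrac{(q^2;q^2)_\infty}{(q^5;q^5)_\infty}=\sum_{n\ge0}a_nq^n$. Then for all $n\ge 0$: $a_n>0$ if $n\equiv 0\pmod 5$; $a_n<0$ if $n\equiv 2,4\pmod 5$; and $a_n=0$ if $n\equiv 1,3\pmod 5$.
   Context: For $|q|<1$, $(a;q)_\infty=\prod_{k\ge0}(1-aq^k)$. *)

theory Defs
  imports "HOL-Analysis.Analysis"
begin

definition qpoch_inf :: "real \<Rightarrow> real \<Rightarrow> real" where
  "qpoch_inf a q = (\<Prod>k. (1 - a * q ^ k))"

end

theory Submission
  imports Defs "HOL-Computational_Algebra.Formal_Power_Series"
begin

text \<open>
  By Jacobi's triple product, (q^2;q^2)_inf = sum_m (-1)^m q^(3m^2 - m). Splitting m by its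
  residue mod 5 turns this series into a combination of five theta series of modulus 150, and
  Schroeter's product formula merges the two classes m = 3, 4 (mod 5) into a single quotient
  of theta products. Each theta product is a product of q-Pochhammer symbols, and dividing by
  (q^5;q^5)_inf = prod_{r=1..30} (q^(5r);q^150)_inf leaves in each of the four pieces a product
  of geometric series 1/(1 - q^(5k)) including 1/(1 - q^5); its coefficients are positive on
  multiples of 5 and vanish elsewhere. Hence
  (q^2;q^2)_inf / (q^5;q^5)_inf = F_0(q) - q^2 F_1(q) + q^10 F_2(q) - q^4 F_4(q)
  with such F_i, and reading off the coefficients in each residue class mod 5 gives the signs.
\<close>

section \<open>Infinite products in logarithmic form\<close>

definition ln_geom :: "real \<Rightarrow> real" where
  "ln_geom y = - ln (1 - y)"

lemma ln_geom_nonneg: "0 \<le> y \<Longrightarrow> y < 1 \<Longrightarrow> 0 \<le> ln_geom y"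
  unfolding ln_geom_def by simp

lemma ln_geom_le:
  assumes "0 \<le> y" "y < 1"
  shows "ln_geom y \<le> y / (1 - y)"
proof -
  have "ln (1 / (1 - y)) \<le> 1 / (1 - y) - 1"
    using assms by (intro ln_le_minus_one) simp
  then show ?thesis
    using assms by (simp add: ln_geom_def ln_div field_simps)
qed

lemma exp_minus_ln_geom: "y < 1 \<Longrightarrow> exp (- ln_geom y) = 1 - y"
  unfolding ln_geom_def by simp

lemma exp_ln_geom: "y < 1 \<Longrightarrow> exp (ln_geom y) = 1 / (1 - y)"
  unfolding ln_geom_def by (simp add: exp_minus inverse_eq_divide)

lemma mult_power_less_one:
  fixes a q :: real
  assumes "a < 1" "0 \<le> a" "0 \<le> q" "q \<le> 1"
  shows "a * q ^ i < 1"
proof -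
  have "a * q ^ i \<le> a"
    using assms by (intro mult_left_le power_le_one) auto
  then show ?thesis
    using assms(1) by linarith
qed

lemma summable_ln_geom_geometric:
  assumes "0 \<le> a" "a < 1" "0 \<le> q" "q < 1"
  shows "summable (\<lambda>i. ln_geom (a * q ^ i))"
proof (rule summable_comparison_test')
  show "summable (\<lambda>i. a / (1 - a) * q ^ i)"
    using assms by (intro summable_mult summable_geometric) simp
  fix i
  have "q ^ i \<le> 1"
    using assms by (simp add: power_le_one)
  then have aq: "0 \<le> a * q ^ i" "a * q ^ i \<le> a"
    using assms by (auto intro: mult_left_le)
  have "ln_geom (a * q ^ i) \<le> a * q ^ i / (1 - a * q ^ i)"
    using aq assms by (intro ln_geom_le) auto
  also have "\<dots> \<le> a * q ^ i / (1 - a)"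
    using aq assms by (intro divide_left_mono) auto
  finally show "norm (ln_geom (a * q ^ i)) \<le> a / (1 - a) * q ^ i"
    using aq assms ln_geom_nonneg[of "a * q ^ i"] by simp
qed

lemma prod_one_minus_eq_exp:
  assumes "\<And>i. i \<in> A \<Longrightarrow> f i < 1"
  shows "(\<Prod>i\<in>A. 1 - f i) = exp (- (\<Sum>i\<in>A. ln_geom (f i)))"
proof (cases "finite A")
  case True
  have "exp (- (\<Sum>i\<in>A. ln_geom (f i))) = (\<Prod>i\<in>A. exp (- ln_geom (f i)))"
    using True by (simp add: exp_sum sum_negf[symmetric])
  also have "\<dots> = (\<Prod>i\<in>A. 1 - f i)"
    using assms by (intro prod.cong) (auto simp: exp_minus_ln_geom)
  finally show ?thesis ..
qed simp

lemma qpoch_partial_tendsto_exp: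
  assumes "0 \<le> a" "a < 1" "0 \<le> q" "q < 1"
  shows "(\<lambda>n. \<Prod>i<n. 1 - a * q ^ i) \<longlonglongrightarrow> exp (- (\<Sum>i. ln_geom (a * q ^ i)))"
proof -
  have "(\<lambda>n. exp (- (\<Sum>i<n. ln_geom (a * q ^ i)))) \<longlonglongrightarrow> exp (- (\<Sum>i. ln_geom (a * q ^ i)))"
    by (intro tendsto_exp tendsto_minus summable_LIMSEQ summable_ln_geom_geometric assms)
  moreover have "(\<Prod>i<n. 1 - a * q ^ i) = exp (- (\<Sum>i<n. ln_geom (a * q ^ i)))" for n
    using assms by (intro prod_one_minus_eq_exp mult_power_less_one) auto
  ultimately show ?thesis
    by simp
qed

lemma qpoch_inf_eq_exp:
  assumes "0 \<le> a" "a < 1" "0 \<le> q" "q < 1"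
  shows "qpoch_inf a q = exp (- (\<Sum>i. ln_geom (a * q ^ i)))"
proof -
  have "(\<lambda>n. \<Prod>i\<le>n. 1 - a * q ^ i) \<longlonglongrightarrow> exp (- (\<Sum>i. ln_geom (a * q ^ i)))"
    using LIMSEQ_Suc[OF qpoch_partial_tendsto_exp[OF assms]] by (simp add: lessThan_Suc_atMost)
  then have "(\<lambda>i. 1 - a * q ^ i) has_prod exp (- (\<Sum>i. ln_geom (a * q ^ i)))"
    unfolding has_prod_def raw_has_prod_def by (intro disjI1 exI[of _ 0]) auto
  then show ?thesis
    unfolding qpoch_inf_def by (rule has_prod_unique[symmetric])
qed

lemma qpoch_partial_tendsto:
  assumes "0 \<le> a" "a < 1" "0 \<le> q" "q < 1"
  shows "(\<lambda>n. \<Prod>i<n. 1 - a * q ^ i) \<longlonglongrightarrow> qpoch_inf a q"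
  using qpoch_partial_tendsto_exp[OF assms] qpoch_inf_eq_exp[OF assms] by simp

lemma qpoch_inf_pos:
  assumes "0 \<le> a" "a < 1" "0 \<le> q" "q < 1"
  shows "0 < qpoch_inf a q"
  using qpoch_inf_eq_exp[OF assms] by simp

lemma qpoch_inf_le_partial:
  assumes "0 \<le> a" "a < 1" "0 \<le> q" "q < 1"
  shows "qpoch_inf a q \<le> (\<Prod>i<n. 1 - a * q ^ i)"
proof -
  have "(\<Sum>i<n. ln_geom (a * q ^ i)) \<le> (\<Sum>i. ln_geom (a * q ^ i))"
    using assms
    by (intro sum_le_suminf summable_ln_geom_geometric ln_geom_nonneg mult_power_less_one)
       (auto intro: mult_nonneg_nonneg)
  moreover have "(\<Prod>i<n. 1 - a * q ^ i) = exp (- (\<Sum>i<n. ln_geom (a * q ^ i)))"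
    using assms by (intro prod_one_minus_eq_exp mult_power_less_one) auto
  ultimately show ?thesis
    using qpoch_inf_eq_exp[OF assms] by simp
qed

section \<open>The finite q-binomial theorem\<close>

lemma Suc_choose_two: "Suc k choose 2 = (k choose 2) + k"
  by (simp add: numeral_2_eq_2)

definition qfac :: "real \<Rightarrow> nat \<Rightarrow> real" where
  "qfac q n = (\<Prod>i<n. 1 - q * q ^ i)"

lemma qfac_0 [simp]: "qfac q 0 = 1"
  by (simp add: qfac_def)

lemma qfac_Suc: "qfac q (Suc n) = qfac q n * (1 - q ^ Suc n)"
  by (simp add: qfac_def)

fun qbinom :: "real \<Rightarrow> nat \<Rightarrow> nat \<Rightarrow> real" where
  "qbinom q n 0 = 1"
| "qbinom q 0 (Suc k) = 0"
| "qbinom q (Suc n) (Suc k) = qbinom q n (Suc k) + q ^ (n - k) * qbinom q n k"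

lemma qbinom_eq_0: "n < k \<Longrightarrow> qbinom q n k = 0"
  by (induction q n k rule: qbinom.induct) auto

lemma qbinom_mult_qfac:
  "k \<le> n \<Longrightarrow> qbinom q n k * qfac q k * qfac q (n - k) = qfac q n"
proof (induction n arbitrary: k)
  case (Suc n)
  show ?case
  proof (cases k)
    case (Suc j)
    with Suc.prems have "j \<le> n" by simp
    have left: "qbinom q n (Suc j) * qfac q (Suc j) * qfac q (n - j) = qfac q n * (1 - q ^ (n - j))"
    proof (cases "j = n")
      case False
      with \<open>j \<le> n\<close> have "n - j = Suc (n - Suc j)" by simp
      then show ?thesis
        using Suc.IH[of "Suc j"] False \<open>j \<le> n\<close> by (simp add: qfac_Suc)
    qed (simp add: qbinom_eq_0)
    have "q ^ (n - j) * qbinom q n j * qfac q (Suc j) * qfac q (n - j)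
        = q ^ (n - j) * (qbinom q n j * qfac q j * qfac q (n - j)) * (1 - q ^ Suc j)"
      by (simp add: qfac_Suc algebra_simps)
    then have right: "q ^ (n - j) * qbinom q n j * qfac q (Suc j) * qfac q (n - j)
        = q ^ (n - j) * qfac q n * (1 - q ^ Suc j)"
      using Suc.IH[OF \<open>j \<le> n\<close>] by simp
    have "qbinom q (Suc n) k * qfac q k * qfac q (Suc n - k)
        = qbinom q n (Suc j) * qfac q (Suc j) * qfac q (n - j)
          + q ^ (n - j) * qbinom q n j * qfac q (Suc j) * qfac q (n - j)"
      using \<open>k = Suc j\<close> by (simp add: algebra_simps)
    also have "\<dots> = qfac q n * (1 - q ^ (n - j) * q ^ Suc j)"
      unfolding left right by (simp add: algebra_simps)
    also have "q ^ (n - j) * q ^ Suc j = q ^ Suc n"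
      using \<open>j \<le> n\<close> by (simp flip: power_add)
    finally show ?thesis
      by (simp add: qfac_Suc)
  qed simp
qed simp

lemma qbinomial_rothe:
  "(\<Prod>i<n. 1 - z * q ^ i) = (\<Sum>k\<le>n. (-1) ^ k * qbinom q n k * q ^ (k choose 2) * z ^ k)"
proof (induction n)
  case (Suc n)
  define c where "c n k = (-1) ^ k * qbinom q n k * q ^ (k choose 2) * z ^ k" for n k
  have step: "c (Suc n) (Suc k) = c n (Suc k) - z * q ^ n * c n k" if "k \<le> n" for k
  proof -
    have "q ^ (n - k) * q ^ (Suc k choose 2) = q ^ n * q ^ (k choose 2)"
      using that by (simp add: Suc_choose_two flip: power_add)
    then show ?thesis
      unfolding c_def by (simp add: algebra_simps)
  qed
  have "(\<Sum>k\<le>Suc n. c (Suc n) k) = c (Suc n) 0 + (\<Sum>k\<le>n. c (Suc n) (Suc k))"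
    by (rule sum.atMost_Suc_shift)
  also have "(\<Sum>k\<le>n. c (Suc n) (Suc k)) = (\<Sum>k\<le>n. c n (Suc k)) - z * q ^ n * (\<Sum>k\<le>n. c n k)"
    by (simp add: step sum_subtractf sum_distrib_left)
  also have "c (Suc n) 0 + ((\<Sum>k\<le>n. c n (Suc k)) - z * q ^ n * (\<Sum>k\<le>n. c n k))
      = (c n 0 + (\<Sum>k\<le>n. c n (Suc k))) - z * q ^ n * (\<Sum>k\<le>n. c n k)"
    by (simp add: c_def)
  also have "c n 0 + (\<Sum>k\<le>n. c n (Suc k)) = (\<Sum>k\<le>Suc n. c n k)"
    by (rule sum.atMost_Suc_shift[symmetric])
  also have "\<dots> = (\<Sum>k\<le>n. c n k)"
    by (simp add: c_def qbinom_eq_0)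
  finally show ?case
    using Suc.IH by (simp add: c_def algebra_simps)
qed (simp add: numeral_2_eq_2)

section \<open>Jacobi's triple product\<close>

definition choose2 :: "int \<Rightarrow> int" where
  "choose2 k = k * (k - 1) div 2"

lemma two_choose2: "2 * choose2 k = k * (k - 1)"
proof -
  have "even (k * (k - 1))"
    by simp
  then show ?thesis
    unfolding choose2_def by simp
qed

lemma choose2_of_nat: "choose2 (int k) = int (k choose 2)"
proof -
  have "2 * choose2 (int k) = 2 * int (k choose 2)"
    unfolding two_choose2 choose_two using two_choose2[of "int k"]
    by (cases k) (auto simp: choose2_def of_nat_div algebra_simps)
  then show ?thesis
    by simp
qed

lemma choose2_uminus: "choose2 (- k) = choose2 (k + 1)"
proof -
  have "2 * choose2 (- k) = 2 * choose2 (k + 1)"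
    unfolding two_choose2 by (simp add: algebra_simps)
  then show ?thesis
    by simp
qed

lemma choose2_add: "choose2 (a + b) = choose2 a + choose2 b + a * b"
proof -
  have "2 * choose2 (a + b) = 2 * (choose2 a + choose2 b + a * b)"
    unfolding distrib_left two_choose2 by (simp add: algebra_simps)
  then show ?thesis
    by simp
qed

lemma choose2_diff: "choose2 (a - b) = choose2 a + choose2 b + b - a * b"
  using choose2_add[of a "- b"] choose2_uminus[of b] choose2_add[of b 1]
  by (simp add: choose2_def)

lemma choose2_mult: "choose2 (c * t) = c * c * choose2 t + choose2 c * t"
proof -
  have "2 * choose2 (c * t) = 2 * (c * c * choose2 t + choose2 c * t)"
    using two_choose2[of "c * t"] two_choose2[of t] two_choose2[of c] by algebra
  then show ?thesis
    by simp
qed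

lemma choose2_numeral: "choose2 0 = 0" "choose2 1 = 0" "choose2 2 = 1" "choose2 3 = 3"
  "choose2 4 = 6" "choose2 5 = 10"
  by (simp_all add: choose2_def)

lemmas choose2_simps = choose2_add choose2_diff choose2_uminus choose2_mult choose2_numeral

definition jacobi_term :: "real \<Rightarrow> real \<Rightarrow> int \<Rightarrow> real" where
  "jacobi_term q z k = (-1) powi k * q powi choose2 k * z powi k"

lemma prod_minus_divide_power:
  fixes q z :: real
  shows "(\<Prod>i<n. - z / q ^ Suc i) = (- z) ^ n / q ^ (Suc n choose 2)"
proof (induction n)
  case (Suc n)
  have "q ^ (Suc n choose 2) * q ^ Suc n = q ^ (Suc (Suc n) choose 2)"
    by (simp only: Suc_choose_two[of "Suc n"] power_add)
  then show ?case
    using Suc.IH by (simp flip: \<open>_ = q ^ (Suc (Suc n) choose 2)\<close>)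
qed (simp add: numeral_2_eq_2)

lemma jacobi_term_diff:
  assumes q: "q \<noteq> 0" and z: "z \<noteq> 0"
  shows "(-1) ^ j * q ^ (j choose 2) * (z / q ^ n) ^ j / ((- z) ^ n / q ^ (Suc n choose 2))
    = jacobi_term q z (int j - int n)"
proof -
  have "2 * (int (j choose 2) + int (Suc n choose 2) - int n * int j) = 2 * choose2 (int j - int n)"
    unfolding choose2_of_nat[symmetric] distrib_left right_diff_distrib two_choose2
    by (simp add: algebra_simps)
  then have e: "int (j choose 2) + int (Suc n choose 2) - int n * int j = choose2 (int j - int n)"
    by simp
  have h: "q ^ (n * j) = q powi (int n * int j)"
    by (metis of_nat_mult power_int_of_nat)
  have "(-1) ^ j * q ^ (j choose 2) * (z / q ^ n) ^ j / ((- z) ^ n / q ^ (Suc n choose 2))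
      = ((-1) ^ j / (-1) ^ n) * ((q ^ (j choose 2) * q ^ (Suc n choose 2)) / q ^ (n * j))
        * (z ^ j / z ^ n)"
    using q z by (simp add: field_simps power_minus[of z] flip: power_mult)
  also have "(-1) ^ j / (-1) ^ n = (-1::real) powi (int j - int n)"
    by (simp add: power_int_diff)
  also have "z ^ j / z ^ n = z powi (int j - int n)"
    using z by (simp add: power_int_diff)
  also have "(q ^ (j choose 2) * q ^ (Suc n choose 2)) / q ^ (n * j)
      = q powi (int (j choose 2) + int (Suc n choose 2) - int n * int j)"
    using q by (simp add: power_int_diff power_int_add h flip: power_add)
  finally show ?thesis
    unfolding e jacobi_term_def by simp
qed

lemma finite_triple_product:
  assumes q: "q \<noteq> 0" and z: "z \<noteq> 0"
  shows "(\<Prod>i<n. 1 - z * q ^ i) * (\<Prod>i<n. 1 - q / z * q ^ i)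
    = (\<Sum>j\<le>2 * n. qbinom q (2 * n) j * jacobi_term q z (int j - int n))"
proof -
  txt \<open>Up to the factor C, the left-hand side is (w;q)_2n for w = z/q^n: the last n factors of
    (w;q)_2n form (z;q)_n, and its first n factors, read backwards,
    are -z/q^(i+1) * (1 - q/z * q^i).\<close>
  define w where "w = z / q ^ n"
  define C where "C = (- z) ^ n / q ^ (Suc n choose 2)"
  have "C \<noteq> 0"
    using q z by (simp add: C_def)
  have "(\<Prod>i<2 * n. 1 - w * q ^ i) = (\<Prod>i<n. 1 - w * q ^ i) * (\<Prod>i<n. 1 - w * q ^ (n + i))"
    using prod.atLeastLessThan_concat[of 0 n "2 * n" "\<lambda>i. 1 - w * q ^ i"]
      prod.atLeastLessThan_shift_bounds[of "\<lambda>i. 1 - w * q ^ i" 0 n n]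
    by (simp add: lessThan_atLeast0 mult_2 comp_def add.commute)
  also have "(\<Prod>i<n. 1 - w * q ^ (n + i)) = (\<Prod>i<n. 1 - z * q ^ i)"
    using q by (simp add: w_def power_add)
  finally have split: "(\<Prod>i<2 * n. 1 - w * q ^ i) = (\<Prod>i<n. 1 - w * q ^ i) * (\<Prod>i<n. 1 - z * q ^ i)" .
  have "(\<Prod>i<n. 1 - w * q ^ i) = (\<Prod>i<n. 1 - w * q ^ (n - Suc i))"
    by (rule prod.nat_diff_reindex[symmetric])
  also have "\<dots> = (\<Prod>i<n. (- z / q ^ Suc i) * (1 - q / z * q ^ i))"
  proof (intro prod.cong refl)
    fix i assume "i \<in> {..<n}"
    then have "q ^ n = q ^ (n - Suc i) * q ^ Suc i"
      by (simp only: power_add[symmetric]) simp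
    then have "w * q ^ (n - Suc i) = z / q ^ Suc i"
      using q by (simp add: w_def field_simps)
    then show "1 - w * q ^ (n - Suc i) = (- z / q ^ Suc i) * (1 - q / z * q ^ i)"
      using q z by (simp add: field_simps)
  qed
  also have "\<dots> = C * (\<Prod>i<n. 1 - q / z * q ^ i)"
    by (simp only: prod.distrib prod_minus_divide_power C_def)
  finally have "C * ((\<Prod>i<n. 1 - z * q ^ i) * (\<Prod>i<n. 1 - q / z * q ^ i))
      = (\<Sum>j\<le>2 * n. (-1) ^ j * qbinom q (2 * n) j * q ^ (j choose 2) * w ^ j)"
    using split qbinomial_rothe[where n = "2 * n" and z = w and q = q] by (simp add: algebra_simps)
  then have "(\<Prod>i<n. 1 - z * q ^ i) * (\<Prod>i<n. 1 - q / z * q ^ i)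
      = (\<Sum>j\<le>2 * n. (-1) ^ j * qbinom q (2 * n) j * q ^ (j choose 2) * w ^ j) / C"
    using \<open>C \<noteq> 0\<close> by (simp add: eq_divide_eq mult.commute)
  also have "\<dots> = (\<Sum>j\<le>2 * n. qbinom q (2 * n) j * ((-1) ^ j * q ^ (j choose 2) * w ^ j / C))"
    by (simp add: sum_divide_distrib algebra_simps)
  finally show ?thesis
    by (simp only: w_def C_def jacobi_term_diff[OF q z])
qed

lemma finite_triple_product_split:
  assumes "q \<noteq> 0" "z \<noteq> 0"
  shows "(\<Prod>i<n. 1 - z * q ^ i) * (\<Prod>i<n. 1 - q / z * q ^ i)
    = (\<Sum>k\<le>n. qbinom q (2 * n) (n + k) * jacobi_term q z (int k))
      + (\<Sum>m<n. qbinom q (2 * n) (n - Suc m) * jacobi_term q z (- int m - 1))"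
proof -
  define g where "g j = qbinom q (2 * n) j * jacobi_term q z (int j - int n)" for j
  have "(\<Sum>j\<le>n + m. g j) = (\<Sum>j<n. g j) + (\<Sum>k\<le>m. g (n + k))" for m
    by (induction m) (auto simp: lessThan_Suc_atMost[symmetric] add.assoc)
  then have "(\<Sum>j\<le>2 * n. g j) = (\<Sum>j<n. g j) + (\<Sum>k\<le>n. g (n + k))"
    by (simp add: mult_2)
  also have "(\<Sum>j<n. g j) = (\<Sum>m<n. g (n - Suc m))"
    by (rule sum.nat_diff_reindex[symmetric])
  also have "\<dots> = (\<Sum>m<n. qbinom q (2 * n) (n - Suc m) * jacobi_term q z (- int m - 1))"
  proof (intro sum.cong refl)
    fix m
    assume "m \<in> {..<n}"
    then have "int (n - Suc m) - int n = - int m - 1"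
      by auto
    then show "g (n - Suc m) = qbinom q (2 * n) (n - Suc m) * jacobi_term q z (- int m - 1)"
      by (simp only: g_def)
  qed
  finally show ?thesis
    using finite_triple_product[OF assms, of n] by (simp add: g_def add.commute)
qed

lemma qfac_tendsto: "0 \<le> q \<Longrightarrow> q < 1 \<Longrightarrow> qfac q \<longlonglongrightarrow> qpoch_inf q q"
  unfolding qfac_def[abs_def] by (rule qpoch_partial_tendsto) auto

lemma qpoch_inf_le_qfac: "0 \<le> q \<Longrightarrow> q < 1 \<Longrightarrow> qpoch_inf q q \<le> qfac q n"
  unfolding qfac_def by (rule qpoch_inf_le_partial) auto

lemma qfac_pos: "0 \<le> q \<Longrightarrow> q < 1 \<Longrightarrow> 0 < qfac q n"
  using qpoch_inf_pos[of q q] qpoch_inf_le_qfac[of q n] by simp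

lemma qfac_le_one:
  assumes "0 \<le> q" "q < 1"
  shows "qfac q n \<le> 1"
  unfolding qfac_def
proof (rule prod_le_1)
  fix i
  have "0 \<le> q * q ^ i" "q * q ^ i < 1"
    using assms by (auto intro: mult_power_less_one)
  then show "0 \<le> 1 - q * q ^ i \<and> 1 - q * q ^ i \<le> 1"
    by simp
qed

lemma qbinom_eq_qfac:
  assumes "0 \<le> q" "q < 1" "k \<le> n"
  shows "qbinom q n k = qfac q n / (qfac q k * qfac q (n - k))"
proof -
  have "qfac q k * qfac q (n - k) \<noteq> 0"
    using qfac_pos[OF assms(1,2)] by (metis mult_pos_pos less_irrefl)
  then show ?thesis
    using qbinom_mult_qfac[OF assms(3), of q] by (simp add: eq_divide_eq mult.assoc)
qed

lemma qbinom_bounds: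
  assumes "0 \<le> q" "q < 1"
  shows "0 \<le> qbinom q n k" "qbinom q n k \<le> 1 / qpoch_inf q q ^ 2"
proof -
  define P where "P = qpoch_inf q q"
  have "0 < P"
    unfolding P_def using assms by (intro qpoch_inf_pos) auto
  have "0 \<le> qbinom q n k \<and> qbinom q n k \<le> 1 / P ^ 2"
  proof (cases "k \<le> n")
    case True
    have P: "P \<le> qfac q k" "P \<le> qfac q (n - k)"
      unfolding P_def using assms by (auto intro: qpoch_inf_le_qfac)
    have "qbinom q n k = qfac q n / (qfac q k * qfac q (n - k))"
      using assms True by (rule qbinom_eq_qfac)
    also have "\<dots> \<le> 1 / (qfac q k * qfac q (n - k))"
      using assms P \<open>0 < P\<close> by (intro divide_right_mono qfac_le_one) auto
    also have "\<dots> \<le> 1 / P ^ 2"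
      using P \<open>0 < P\<close> by (auto simp: power2_eq_square intro!: divide_left_mono mult_mono)
    moreover have "0 \<le> qfac q n / (qfac q k * qfac q (n - k))"
      using qfac_pos[OF assms] by (simp add: less_imp_le)
    ultimately show ?thesis
      using \<open>qbinom q n k = _\<close> by simp
  qed (simp add: qbinom_eq_0 \<open>0 < P\<close>)
  then show "0 \<le> qbinom q n k" "qbinom q n k \<le> 1 / qpoch_inf q q ^ 2"
    by (simp_all add: P_def)
qed

lemma qbinom_central_tendsto:
  assumes "0 \<le> q" "q < 1"
  shows "(\<lambda>n. qbinom q (2 * n) (n + k)) \<longlonglongrightarrow> 1 / qpoch_inf q q"
    and "(\<lambda>n. qbinom q (2 * n) (n - k)) \<longlonglongrightarrow> 1 / qpoch_inf q q"
proof -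
  define P where "P = qpoch_inf q q"
  define Q where "Q n = qfac q (2 * n) / (qfac q (n + k) * qfac q (n - k))" for n
  have "0 < P"
    unfolding P_def using assms by (intro qpoch_inf_pos) auto
  have "(\<lambda>n. qfac q (2 * n)) \<longlonglongrightarrow> P"
    unfolding P_def using filterlim_compose[OF qfac_tendsto[OF assms]
      filterlim_subseq[of "\<lambda>n. 2 * n"]]
    by (simp add: strict_mono_def)
  moreover have "(\<lambda>n. qfac q (n + k)) \<longlonglongrightarrow> P"
    unfolding P_def using LIMSEQ_ignore_initial_segment[OF qfac_tendsto[OF assms]] .
  moreover have "(\<lambda>n. qfac q (n - k)) \<longlonglongrightarrow> P"
    unfolding P_def using filterlim_compose[OF qfac_tendsto[OF assms]
      filterlim_minus_const_nat_at_top] .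
  ultimately have "Q \<longlonglongrightarrow> P / (P * P)"
    unfolding Q_def using \<open>0 < P\<close> by (intro tendsto_divide tendsto_mult) simp_all
  then have Q: "Q \<longlonglongrightarrow> 1 / qpoch_inf q q"
    using \<open>0 < P\<close> by (simp add: P_def)
  have "Q n = qbinom q (2 * n) (n + k) \<and> Q n = qbinom q (2 * n) (n - k)" if "k \<le> n" for n
  proof -
    from that have "2 * n - (n + k) = n - k" "2 * n - (n - k) = n + k"
      by auto
    then show ?thesis
      unfolding Q_def using that qbinom_eq_qfac[OF assms, of "n + k" "2 * n"]
        qbinom_eq_qfac[OF assms, of "n - k" "2 * n"]
      by (simp add: mult.commute)
  qed
  then have "eventually (\<lambda>n. Q n = qbinom q (2 * n) (n + k) \<and> Q n = qbinom q (2 * n) (n - k))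
      sequentially"
    using eventually_ge_at_top[of k] by (rule eventually_mono[rotated])
  then show "(\<lambda>n. qbinom q (2 * n) (n + k)) \<longlonglongrightarrow> 1 / qpoch_inf q q"
    and "(\<lambda>n. qbinom q (2 * n) (n - k)) \<longlonglongrightarrow> 1 / qpoch_inf q q"
    by (auto intro: Lim_transform_eventually[OF Q] elim: eventually_mono)
qed

lemma jacobi_term_of_nat: "jacobi_term q z (int k) = (-1) ^ k * q ^ (k choose 2) * z ^ k"
  unfolding jacobi_term_def choose2_of_nat by simp

lemma jacobi_term_neg:
  "jacobi_term q z (- int m - 1) = (-1) ^ Suc m * q ^ (Suc (Suc m) choose 2) / z ^ Suc m"
proof -
  have m: "- int m - 1 = - int (Suc m)"
    by simp
  have "choose2 (- int (Suc m)) = int (Suc (Suc m) choose 2)"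
    unfolding choose2_uminus choose2_of_nat[symmetric] by simp
  moreover have "(-1::real) powi (- int (Suc m)) = (-1) ^ Suc m"
    unfolding power_int_minus power_int_of_nat by (simp add: power_inverse[symmetric])
  moreover have "z powi (- int (Suc m)) = 1 / z ^ Suc m"
    unfolding power_int_minus power_int_of_nat by (simp add: inverse_eq_divide)
  ultimately show ?thesis
    unfolding jacobi_term_def m power_int_of_nat by simp
qed

lemma norm_jacobi_term_of_nat_le:
  assumes "0 < q" "q \<le> 1" "0 < z"
  shows "norm (jacobi_term q z (int k)) \<le> z ^ k"
proof -
  have "q ^ (k choose 2) * z ^ k \<le> 1 * z ^ k"
    using assms by (intro mult_right_mono power_le_one) auto
  then show ?thesis
    using assms by (simp add: jacobi_term_of_nat abs_mult power_abs)
qed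

lemma norm_jacobi_term_neg_le:
  assumes "0 < q" "q \<le> 1" "0 < z"
  shows "norm (jacobi_term q z (- int m - 1)) \<le> (q / z) ^ Suc m"
proof -
  have "q ^ (Suc (Suc m) choose 2) \<le> q ^ Suc m"
    using assms by (intro power_decreasing) (auto simp: Suc_choose_two)
  then have "q ^ (Suc (Suc m) choose 2) / z ^ Suc m \<le> q ^ Suc m / z ^ Suc m"
    using assms by (intro divide_right_mono) auto
  then show ?thesis
    using assms by (simp add: jacobi_term_neg abs_mult power_abs power_divide)
qed

lemma has_sum_int_split:
  fixes h :: "int \<Rightarrow> 'a :: banach"
  assumes "summable (\<lambda>k. norm (h (int k)))" "summable (\<lambda>m. norm (h (- int m - 1)))"
  shows "(h has_sum ((\<Sum>k. h (int k)) + (\<Sum>m. h (- int m - 1)))) UNIV"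
proof -
  have "((\<lambda>k. h (int k)) has_sum (\<Sum>k. h (int k))) UNIV"
    by (rule norm_summable_imp_has_sum[OF assms(1)
      summable_sums[OF summable_norm_cancel[OF assms(1)]]])
  then have nonneg: "(h has_sum (\<Sum>k. h (int k))) (range int)"
    by (subst has_sum_reindex) (auto simp: comp_def)
  have "((\<lambda>m. h (- int m - 1)) has_sum (\<Sum>m. h (- int m - 1))) UNIV"
    by (rule norm_summable_imp_has_sum[OF assms(2)
      summable_sums[OF summable_norm_cancel[OF assms(2)]]])
  then have neg: "(h has_sum (\<Sum>m. h (- int m - 1))) (range (\<lambda>m. - int m - 1))"
    by (subst has_sum_reindex) (auto simp: comp_def inj_def)
  have "range int \<union> range (\<lambda>m::nat. - int m - 1) = UNIV"
  proof (intro set_eqI iffI)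
    fix k :: int
    show "k \<in> range int \<union> range (\<lambda>m::nat. - int m - 1)"
    proof (cases "0 \<le> k")
      case True
      then have "k = int (nat k)"
        by simp
      then show ?thesis
        by blast
    next
      case False
      then have "k = - int (nat (- k - 1)) - 1"
        by simp
      then show ?thesis
        by blast
    qed
  qed simp
  moreover have "range int \<inter> range (\<lambda>m::nat. - int m - 1) = {}"
    by auto
  ultimately show ?thesis
    using has_sum_Un_disjoint[OF nonneg neg] by simp
qed

lemma tendsto_suminf_bounded_weights:
  fixes f :: "nat \<Rightarrow> real"
  assumes f: "summable (\<lambda>k. norm (f k))"
    and w: "\<And>k. (\<lambda>n. w k n) \<longlonglongrightarrow> c" and bound: "\<And>k n. \<bar>w k n\<bar> \<le> B"
  shows "(\<lambda>n. \<Sum>k. w k n * f k) \<longlonglongrightarrow> c * (\<Sum>k. f k)"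
proof -
  have "eventually (\<lambda>(k, n). norm (w k n * f k) \<le> B * norm (f k)) (at_top \<times>\<^sub>F sequentially)"
    using bound by (intro always_eventually) (auto simp: abs_mult intro: mult_right_mono)
  from tannerys_theorem[OF tendsto_mult_right[OF w] this summable_mult[OF f]]
  have "(\<lambda>n. \<Sum>k. w k n * f k) \<longlonglongrightarrow> (\<Sum>k. c * f k)"
    by simp
  then show ?thesis
    using summable_norm_cancel[OF f] by (simp add: suminf_mult)
qed

lemma finite_triple_product_suminf:
  assumes "q \<noteq> 0" "z \<noteq> 0"
  shows "(\<Prod>i<n. 1 - z * q ^ i) * (\<Prod>i<n. 1 - q / z * q ^ i)
    = (\<Sum>k. qbinom q (2 * n) (n + k) * jacobi_term q z (int k))
      + (\<Sum>m. (if m < n then qbinom q (2 * n) (n - Suc m) else 0) * jacobi_term q z (- int m - 1))"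
proof -
  have "(\<Sum>k. qbinom q (2 * n) (n + k) * jacobi_term q z (int k))
      = (\<Sum>k\<le>n. qbinom q (2 * n) (n + k) * jacobi_term q z (int k))"
    by (rule suminf_finite) (auto simp: qbinom_eq_0)
  moreover have "(\<Sum>m. (if m < n then qbinom q (2 * n) (n - Suc m) else 0)
        * jacobi_term q z (- int m - 1))
      = (\<Sum>m<n. qbinom q (2 * n) (n - Suc m) * jacobi_term q z (- int m - 1))"
    by (subst suminf_finite[of "{..<n}"]) auto
  ultimately show ?thesis
    using finite_triple_product_split[OF assms, of n] by simp
qed

lemma qbinom_lower_tendsto:
  assumes "0 \<le> q" "q < 1"
  shows "(\<lambda>n. if m < n then qbinom q (2 * n) (n - Suc m) else 0) \<longlonglongrightarrow> 1 / qpoch_inf q q"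
proof -
  have "eventually (\<lambda>n. qbinom q (2 * n) (n - Suc m)
        = (if m < n then qbinom q (2 * n) (n - Suc m) else 0))
      sequentially"
    using eventually_gt_at_top[of m] by eventually_elim simp
  then show ?thesis
    by (rule Lim_transform_eventually[OF qbinom_central_tendsto(2)[OF assms]])
qed

lemma summable_norm_jacobi_term:
  assumes "0 < q" "q < z" "z < 1"
  shows "summable (\<lambda>k. norm (jacobi_term q z (int k)))"
    and "summable (\<lambda>m. norm (jacobi_term q z (- int m - 1)))"
proof -
  show "summable (\<lambda>k. norm (jacobi_term q z (int k)))"
    using assms norm_jacobi_term_of_nat_le[of q z]
    by (intro summable_comparison_test'[OF summable_geometric[of z]]) auto
  have "0 < q / z" "q / z < 1"
    using assms by auto
  then show "summable (\<lambda>m. norm (jacobi_term q z (- int m - 1)))"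
    using assms norm_jacobi_term_neg_le[of q z]
    by (intro summable_comparison_test'[OF summable_mult[OF summable_geometric[of "q / z"],
       of "q / z"]])
      auto
qed

theorem jacobi_triple_product:
  assumes "0 < q" "q < z" "z < 1"
  shows "(jacobi_term q z has_sum qpoch_inf q q * qpoch_inf z q * qpoch_inf (q / z) q) UNIV"
proof -
  define P where "P = qpoch_inf q q"
  have "0 < P"
    unfolding P_def using assms by (intro qpoch_inf_pos) auto
  note summable = summable_norm_jacobi_term[OF assms]
  have "q \<noteq> 0" "z \<noteq> 0"
    using assms by auto
  txt \<open>Tannery's theorem: the q-binomial weights are bounded and tend to 1/P.\<close>
  have "(\<lambda>n. qbinom q (2 * n) (n + k)) \<longlonglongrightarrow> 1 / P" "\<bar>qbinom q (2 * n) (n + k)\<bar> \<le> 1 / P ^ 2"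
    and "(\<lambda>n. if m < n then qbinom q (2 * n) (n - Suc m) else 0) \<longlonglongrightarrow> 1 / P"
    and "\<bar>if m < n then qbinom q (2 * n) (n - Suc m) else 0\<bar> \<le> 1 / P ^ 2" for k m n
    unfolding P_def using assms qbinom_bounds[of q]
    by (auto intro: qbinom_central_tendsto qbinom_lower_tendsto)
  then have "(\<lambda>n. (\<Prod>i<n. 1 - z * q ^ i) * (\<Prod>i<n. 1 - q / z * q ^ i))
      \<longlonglongrightarrow> 1 / P * (\<Sum>k. jacobi_term q z (int k)) + 1 / P * (\<Sum>m. jacobi_term q z (- int m - 1))"
    unfolding finite_triple_product_suminf[OF \<open>q \<noteq> 0\<close> \<open>z \<noteq> 0\<close>]
    by (intro tendsto_add tendsto_suminf_bounded_weights[OF summable(1)]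
        tendsto_suminf_bounded_weights[OF summable(2)])
  moreover have "(\<lambda>n. (\<Prod>i<n. 1 - z * q ^ i) * (\<Prod>i<n. 1 - q / z * q ^ i))
      \<longlonglongrightarrow> qpoch_inf z q * qpoch_inf (q / z) q"
    using assms by (intro tendsto_mult qpoch_partial_tendsto) auto
  ultimately have "1 / P * (\<Sum>k. jacobi_term q z (int k))
      + 1 / P * (\<Sum>m. jacobi_term q z (- int m - 1))
      = qpoch_inf z q * qpoch_inf (q / z) q"
    by (rule LIMSEQ_unique)
  then have "(\<Sum>k. jacobi_term q z (int k)) + (\<Sum>m. jacobi_term q z (- int m - 1))
      = P * (qpoch_inf z q * qpoch_inf (q / z) q)"
    using \<open>0 < P\<close> by (simp add: field_simps)
  then show ?thesis
    using has_sum_int_split[OF summable] by (simp add: P_def mult.assoc)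
qed

section \<open>Theta products: Schroeter's formula and a 5-dissection\<close>

definition theta_term :: "nat \<Rightarrow> nat \<Rightarrow> real \<Rightarrow> int \<Rightarrow> real" where
  "theta_term N j q m = (-1) powi m * q powi (int N * choose2 m + int j * m)"

definition theta_prod :: "nat \<Rightarrow> nat \<Rightarrow> real \<Rightarrow> real" where
  "theta_prod N j q
    = qpoch_inf (q ^ N) (q ^ N) * qpoch_inf (q ^ j) (q ^ N) * qpoch_inf (q ^ (N - j)) (q ^ N)"

lemma jacobi_term_power: "q \<noteq> 0 \<Longrightarrow> jacobi_term (q ^ N) (q ^ j) m = theta_term N j q m"
  unfolding jacobi_term_def theta_term_def by (simp add: power_int_power power_int_add mult.assoc)

lemma theta_has_sum:
  assumes "0 < q" "q < 1" "0 < j" "j < N"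
  shows "(theta_term N j q has_sum theta_prod N j q) UNIV"
proof -
  have "q ^ N < q ^ j" "q ^ j < 1"
    using assms by (auto intro: power_strict_decreasing power_less_one_iff[THEN iffD2])
  moreover have "q ^ N / q ^ j = q ^ (N - j)"
    using assms by (simp add: power_diff)
  moreover have "jacobi_term (q ^ N) (q ^ j) = theta_term N j q"
    using assms by (intro ext jacobi_term_power) auto
  ultimately show ?thesis
    using jacobi_triple_product[of "q ^ N" "q ^ j"] assms by (simp add: theta_prod_def)
qed

lemma theta_term_mult:
  assumes "q \<noteq> 0"
  shows "theta_term N j q a * theta_term M i q b
    = (-1) powi (a + b) * q powi (int N * choose2 a + int j * a + int M * choose2 b + int i * b)"
  unfolding theta_term_def using assms by (simp add: power_int_add algebra_simps)

lemma theta_term_eqI: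
  assumes "q \<noteq> 0" "(-1::real) powi k = s * (-1) powi m"
    and "int N * choose2 k + int j * k = int e + (int M * choose2 m + int i * m)"
  shows "theta_term N j q k = s * q ^ e * theta_term M i q m"
  using assms unfolding theta_term_def by (simp add: power_int_add)

lemma theta_term_mult_eqI:
  assumes "q \<noteq> 0" "(-1::real) powi (a + b) = s * (-1) powi (c + d)"
    and "int N * choose2 a + int j * a + int M * choose2 b + int i * b
      = int e + (int N' * choose2 c + int j' * c + int M' * choose2 d + int i' * d)"
  shows "theta_term N j q a * theta_term M i q b
    = s * q ^ e * (theta_term N' j' q c * theta_term M' i' q d)"
  using assms unfolding theta_term_mult[OF assms(1)] by (simp add: power_int_add)

lemma schroeter_term_identities:
  assumes "q \<noteq> 0"
  shows "theta_term 150 40 q (b + 2 * t) * theta_term 50 20 q b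
      = theta_term 50 10 q (b + 3 * t) * theta_term 150 50 q (b + t)"
    and "theta_term 50 10 q (1 - 2 * b - 3 * t) * theta_term 150 50 q t
      = - (q ^ 10 * (theta_term 150 10 q (b + 2 * t) * theta_term 50 20 q b))"
    and "theta_term 150 40 q (b + 2 * t + 1) * theta_term 50 20 q b
      = q ^ 10 * (theta_term 150 10 q (- t) * theta_term 50 20 q (- 2 * b - 3 * t - 1))"
proof -
  have "theta_term 150 40 q (b + 2 * t) * theta_term 50 20 q b
      = 1 * q ^ 0 * (theta_term 50 10 q (b + 3 * t) * theta_term 150 50 q (b + t))"
    by (rule theta_term_mult_eqI[OF assms])
      (simp add: power_int_minus_left, simp add: choose2_simps algebra_simps)
  then show "theta_term 150 40 q (b + 2 * t) * theta_term 50 20 q b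
      = theta_term 50 10 q (b + 3 * t) * theta_term 150 50 q (b + t)"
    by simp
  have "theta_term 50 10 q (1 - 2 * b - 3 * t) * theta_term 150 50 q t
      = (-1) * q ^ 10 * (theta_term 150 10 q (b + 2 * t) * theta_term 50 20 q b)"
    by (rule theta_term_mult_eqI[OF assms])
      (simp add: power_int_minus_left, simp add: choose2_simps algebra_simps,
        use two_choose2[of b] in algebra)
  then show "theta_term 50 10 q (1 - 2 * b - 3 * t) * theta_term 150 50 q t
      = - (q ^ 10 * (theta_term 150 10 q (b + 2 * t) * theta_term 50 20 q b))"
    by simp
  have "theta_term 150 40 q (b + 2 * t + 1) * theta_term 50 20 q b
      = 1 * q ^ 10 * (theta_term 150 10 q (- t) * theta_term 50 20 q (- 2 * b - 3 * t - 1))"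
    by (rule theta_term_mult_eqI[OF assms])
      (simp add: power_int_minus_left, simp add: choose2_simps algebra_simps,
        use two_choose2[of b] in algebra)
  then show "theta_term 150 40 q (b + 2 * t + 1) * theta_term 50 20 q b
      = q ^ 10 * (theta_term 150 10 q (- t) * theta_term 50 20 q (- 2 * b - 3 * t - 1))"
    by simp
qed

lemma has_sum_product:
  fixes f g :: "'a \<Rightarrow> real"
  assumes f: "(f has_sum F) UNIV" and g: "(g has_sum G) UNIV"
  shows "((\<lambda>p. f (fst p) * g (snd p)) has_sum F * G) UNIV"
proof -
  have af: "(\<lambda>x. norm (f x)) summable_on UNIV" and ag: "(\<lambda>y. norm (g y)) summable_on UNIV"
    using f g has_sum_imp_summable summable_on_iff_abs_summable_on_real by blast+
  have "(\<lambda>p. norm (f (fst p) * g (snd p))) summable_on UNIV \<times> UNIV"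
  proof (rule iffD2[OF Infinite_Sum.abs_summable_on_Sigma_iff], intro conjI ballI)
    show "(\<lambda>y. norm (f (fst (x, y)) * g (snd (x, y)))) summable_on UNIV" for x
      using summable_on_cmult_right[OF ag, of "norm (f x)"] by (simp add: abs_mult)
    have "(\<lambda>x. norm (f x) * (\<Sum>\<^sub>\<infinity>y. norm (g y))) summable_on UNIV"
      by (rule summable_on_cmult_left[OF af])
    moreover have "0 \<le> (\<Sum>\<^sub>\<infinity>y. norm (g y))"
      by (rule infsum_nonneg) simp
    ultimately show "(\<lambda>x. norm (\<Sum>\<^sub>\<infinity>y. norm (f (fst (x, y)) * g (snd (x, y))))) summable_on UNIV"
      by (simp add: abs_mult infsum_cmult_right' summable_on_iff_abs_summable_on_real[symmetric])
  qed
  then have "(\<lambda>p. f (fst p) * g (snd p)) summable_on UNIV \<times> UNIV"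
    by (rule abs_summable_summable)
  then have "((\<lambda>p. f (fst p) * g (snd p)) has_sum F * G) (UNIV \<times> UNIV)"
    using has_sum_cmult_right[OF g] has_sum_cmult_left[OF f]
    by (intro has_sum_SigmaI[where g = "\<lambda>x. f x * G"]) auto
  then show ?thesis
    by simp
qed

lemma has_sum_split_ranges:
  fixes h :: "'a \<Rightarrow> real"
  assumes "(h has_sum S) UNIV" "inj g1" "inj g2"
    and "range g1 \<inter> range g2 = {}" "range g1 \<union> range g2 = UNIV"
  shows "(h \<circ> g1 has_sum infsum h (range g1)) UNIV"
    and "(h \<circ> g2 has_sum infsum h (range g2)) UNIV"
    and "S = infsum h (range g1) + infsum h (range g2)"
proof -
  have "h summable_on UNIV"
    using assms(1) by (rule has_sum_imp_summable)
  then have h1: "(h has_sum infsum h (range g1)) (range g1)"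
    and h2: "(h has_sum infsum h (range g2)) (range g2)"
    by (auto intro: has_sum_infsum summable_on_subset_banach)
  show "(h \<circ> g1 has_sum infsum h (range g1)) UNIV" "(h \<circ> g2 has_sum infsum h (range g2)) UNIV"
    using h1 h2 has_sum_reindex[OF assms(2)] has_sum_reindex[OF assms(3)] by blast+
  show "S = infsum h (range g1) + infsum h (range g2)"
    using has_sum_Un_disjoint[OF h1 h2 assms(4)] assms(1,5) has_sum_unique by auto
qed

lemma schroeter_index_maps:
  defines "g1 \<equiv> \<lambda>p :: int \<times> int. (fst p + 2 * snd p, fst p)"
    and "g2 \<equiv> \<lambda>p :: int \<times> int. (fst p + 2 * snd p + 1, fst p)"
    and "h1 \<equiv> \<lambda>p :: int \<times> int. (fst p + 3 * snd p, fst p + snd p)"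
    and "h2 \<equiv> \<lambda>p :: int \<times> int. (1 - 2 * fst p - 3 * snd p, snd p)"
  shows "inj g1" "inj g2" "range g1 \<inter> range g2 = {}" "range g1 \<union> range g2 = UNIV"
    and "inj h1" "inj h2" "range h1 \<inter> range h2 = {}" "range h1 \<union> range h2 = UNIV"
proof -
  have "range g1 = {p. even (fst p - snd p)}" "range g2 = {p. odd (fst p - snd p)}"
    "range h1 = {p. even (fst p - snd p)}" "range h2 = {p. odd (fst p - snd p)}"
    unfolding g1_def g2_def h1_def h2_def
    by (auto simp: set_eq_iff image_iff prod_eq_iff; presburger)+
  then show "inj g1" "inj g2" "range g1 \<inter> range g2 = {}" "range g1 \<union> range g2 = UNIV"
    and "inj h1" "inj h2" "range h1 \<inter> range h2 = {}" "range h1 \<union> range h2 = UNIV"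
    unfolding g1_def g2_def h1_def h2_def inj_def by auto
qed

theorem schroeter:
  assumes "0 < q" "q < 1"
  shows "(theta_prod 150 40 q - q ^ 10 * theta_prod 150 10 q) * theta_prod 50 20 q
    = theta_prod 50 10 q * theta_prod 150 50 q"
proof -
  have "q \<noteq> 0"
    using assms by simp
  txt \<open>Split each double theta sum over pairs of integers by the parity of the difference of
    its indices; the pieces then match term by term after the linear changes of variables below.\<close>
  define f1 where "f1 p = theta_term 150 40 q (fst p) * theta_term 50 20 q (snd p)" for p
  define f2 where "f2 p = theta_term 150 10 q (fst p) * theta_term 50 20 q (snd p)" for p
  define f3 where "f3 p = theta_term 50 10 q (fst p) * theta_term 150 50 q (snd p)" for p
  define g1 where "g1 = (\<lambda>p :: int \<times> int. (fst p + 2 * snd p, fst p))"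
  define g2 where "g2 = (\<lambda>p :: int \<times> int. (fst p + 2 * snd p + 1, fst p))"
  define h1 where "h1 = (\<lambda>p :: int \<times> int. (fst p + 3 * snd p, fst p + snd p))"
  define h2 where "h2 = (\<lambda>p :: int \<times> int. (1 - 2 * fst p - 3 * snd p, snd p))"
  define \<sigma> where "\<sigma> = (\<lambda>p :: int \<times> int. (- 2 * fst p - 3 * snd p - 1, fst p + snd p))"
  note g = schroeter_index_maps(1-4)[folded g1_def g2_def]
    and h = schroeter_index_maps(5-8)[folded h1_def h2_def]
  have "bij \<sigma>"
    by (rule o_bij[where g = "\<lambda>p. (3 * snd p + fst p + 1, - 2 * snd p - fst p - 1)"])
      (auto simp: \<sigma>_def fun_eq_iff)
  have hs: "(f1 has_sum theta_prod 150 40 q * theta_prod 50 20 q) UNIV"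
    "(f2 has_sum theta_prod 150 10 q * theta_prod 50 20 q) UNIV"
    "(f3 has_sum theta_prod 50 10 q * theta_prod 150 50 q) UNIV"
    unfolding f1_def f2_def f3_def using assms by (auto intro!: has_sum_product theta_has_sum)
  note S1 = has_sum_split_ranges[OF hs(1) g] and S2 = has_sum_split_ranges[OF hs(2) g]
    and S3 = has_sum_split_ranges[OF hs(3) h]
  have "f1 \<circ> g1 = f3 \<circ> h1"
    using schroeter_term_identities(1)[OF \<open>q \<noteq> 0\<close>]
    by (simp add: fun_eq_iff f1_def f3_def g1_def h1_def)
  then have A: "infsum f1 (range g1) = infsum f3 (range h1)"
    using S1(1) S3(1) by (metis has_sum_unique)
  have "f3 \<circ> h2 = (\<lambda>p. - (q ^ 10 * (f2 \<circ> g1) p))"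
    using schroeter_term_identities(2)[OF \<open>q \<noteq> 0\<close>]
    by (simp add: fun_eq_iff f2_def f3_def g1_def h2_def)
  moreover have "((\<lambda>p. - (q ^ 10 * (f2 \<circ> g1) p)) has_sum - (q ^ 10 * infsum f2 (range g1))) UNIV"
    using has_sum_cmult_right[OF S2(1)] by (simp add: has_sum_uminus)
  ultimately have B: "infsum f3 (range h2) = - (q ^ 10 * infsum f2 (range g1))"
    using S3(2) by (metis has_sum_unique)
  have "f1 \<circ> g2 = (\<lambda>p. q ^ 10 * (f2 \<circ> g2 \<circ> \<sigma>) p)"
    using schroeter_term_identities(3)[OF \<open>q \<noteq> 0\<close>]
    by (simp add: fun_eq_iff f1_def f2_def g2_def \<sigma>_def algebra_simps)
  moreover have "(f2 \<circ> g2 \<circ> \<sigma> has_sum infsum f2 (range g2)) UNIV"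
    using S2(2) \<open>bij \<sigma>\<close> has_sum_reindex_bij_betw[of \<sigma> UNIV UNIV "f2 \<circ> g2"] by (simp add: comp_def)
  ultimately have C: "infsum f1 (range g2) = q ^ 10 * infsum f2 (range g2)"
    using S1(2) has_sum_cmult_right by (metis has_sum_unique)
  show ?thesis
    using S1(3) S2(3) S3(3) A B C by (simp add: algebra_simps)
qed

lemma has_sum_residue_classes:
  fixes h :: "'a \<Rightarrow> 'b :: banach" and d :: nat
  assumes "(h has_sum S) UNIV" "bij_betw \<phi> ({..<d} \<times> UNIV) UNIV"
  shows "S = (\<Sum>r<d. \<Sum>\<^sub>\<infinity>m. h (\<phi> (r, m)))"
proof -
  have hs: "((\<lambda>p. h (\<phi> p)) has_sum S) ({..<d} \<times> UNIV)"
    using assms by (simp add: has_sum_reindex_bij_betw)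
  then have "S = (\<Sum>\<^sub>\<infinity>p\<in>{..<d} \<times> UNIV. h (\<phi> p))"
    by (simp add: infsumI)
  also have "\<dots> = (\<Sum>\<^sub>\<infinity>r\<in>{..<d}. \<Sum>\<^sub>\<infinity>m. h (\<phi> (r, m)))"
    using infsum_Sigma_banach[of "\<lambda>p. h (\<phi> p)" "{..<d}" "\<lambda>_. UNIV"] hs has_sum_imp_summable
    by fastforce
  finally show ?thesis
    by simp
qed

lemma bij_betw_int_residues:
  "0 < d \<Longrightarrow> bij_betw (\<lambda>p. int d * snd p + int (fst p)) ({..<d} \<times> (UNIV :: int set)) UNIV"
  by (rule bij_betw_byWitness[where f' = "\<lambda>k. (nat (k mod int d), k div int d)"])
    (auto simp: nat_less_iff image_subset_iff)

lemma bij_betw_nat_residues: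
  "0 < d \<Longrightarrow> bij_betw (\<lambda>p. d * snd p + fst p) ({..<d} \<times> (UNIV :: nat set)) UNIV"
  by (rule bij_betw_byWitness[where f' = "\<lambda>k. (k mod d, k div d)"]) auto

lemma theta_term_residues_mod_5:
  assumes "q \<noteq> 0"
  shows "theta_term 6 2 q (5 * m) = theta_term 150 70 q m"
    and "theta_term 6 2 q (5 * m + 1) = - (q ^ 2 * theta_term 150 100 q m)"
    and "theta_term 6 2 q (5 * m + 2) = q ^ 10 * theta_term 150 130 q m"
    and "theta_term 6 2 q (5 * m + 3) = q ^ 14 * theta_term 150 10 q (m + 1)"
    and "theta_term 6 2 q (5 * m + 4) = - (q ^ 4 * theta_term 150 40 q (m + 1))"
proof -
  have "theta_term 6 2 q (5 * m) = 1 * q ^ 0 * theta_term 150 70 q m"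
    by (rule theta_term_eqI[OF assms])
      (simp add: power_int_minus_left,
        (simp add: choose2_simps algebra_simps; use two_choose2[of m] in algebra))
  then show "theta_term 6 2 q (5 * m) = theta_term 150 70 q m"
    by simp
  have "theta_term 6 2 q (5 * m + 1) = (-1) * q ^ 2 * theta_term 150 100 q m"
    by (rule theta_term_eqI[OF assms])
      (simp add: power_int_minus_left,
        (simp add: choose2_simps algebra_simps; use two_choose2[of m] in algebra))
  then show "theta_term 6 2 q (5 * m + 1) = - (q ^ 2 * theta_term 150 100 q m)"
    by simp
  have "theta_term 6 2 q (5 * m + 2) = 1 * q ^ 10 * theta_term 150 130 q m"
    by (rule theta_term_eqI[OF assms])
      (simp add: power_int_minus_left,
        (simp add: choose2_simps algebra_simps; use two_choose2[of m] in algebra))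
  then show "theta_term 6 2 q (5 * m + 2) = q ^ 10 * theta_term 150 130 q m"
    by simp
  have "theta_term 6 2 q (5 * m + 3) = 1 * q ^ 14 * theta_term 150 10 q (m + 1)"
    by (rule theta_term_eqI[OF assms])
      (simp add: power_int_minus_left,
        (simp add: choose2_simps algebra_simps; use two_choose2[of m] in algebra))
  then show "theta_term 6 2 q (5 * m + 3) = q ^ 14 * theta_term 150 10 q (m + 1)"
    by simp
  have "theta_term 6 2 q (5 * m + 4) = (-1) * q ^ 4 * theta_term 150 40 q (m + 1)"
    by (rule theta_term_eqI[OF assms])
      (simp add: power_int_minus_left,
        (simp add: choose2_simps algebra_simps; use two_choose2[of m] in algebra))
  then show "theta_term 6 2 q (5 * m + 4) = - (q ^ 4 * theta_term 150 40 q (m + 1))"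
    by simp
qed

lemma has_sum_shift_int:
  "(h has_sum S) UNIV \<Longrightarrow> ((\<lambda>m :: int. h (m + 1)) has_sum S) UNIV"
  using has_sum_reindex_bij_witness[of UNIV "\<lambda>m. m - 1" "\<lambda>m. m + 1" UNIV h "\<lambda>m. h (m + 1)" S S]
  by simp

theorem theta_dissection:
  assumes "0 < q" "q < 1"
  shows "theta_prod 6 2 q = theta_prod 150 70 q - q ^ 2 * theta_prod 150 100 q
    + q ^ 10 * theta_prod 150 130 q - q ^ 4 * (theta_prod 150 40 q - q ^ 10 * theta_prod 150 10 q)"
proof -
  have "q \<noteq> 0"
    using assms by simp
  note residues = theta_term_residues_mod_5[OF \<open>q \<noteq> 0\<close>]
  have T: "(theta_term 150 j q has_sum theta_prod 150 j q) UNIV" if "0 < j" "j < 150" for j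
    using assms that by (rule theta_has_sum)
  have "theta_prod 6 2 q = (\<Sum>r<5. \<Sum>\<^sub>\<infinity>m. theta_term 6 2 q (int 5 * m + int r))"
    using has_sum_residue_classes[OF theta_has_sum bij_betw_int_residues, of q 2 6 5] assms by simp
  also have "\<dots> = (\<Sum>\<^sub>\<infinity>m. theta_term 6 2 q (5 * m)) + (\<Sum>\<^sub>\<infinity>m. theta_term 6 2 q (5 * m + 1))
      + (\<Sum>\<^sub>\<infinity>m. theta_term 6 2 q (5 * m + 2)) + (\<Sum>\<^sub>\<infinity>m. theta_term 6 2 q (5 * m + 3))
      + (\<Sum>\<^sub>\<infinity>m. theta_term 6 2 q (5 * m + 4))"
    by (simp add: lessThan_nat_numeral algebra_simps)
  also have "\<dots> = theta_prod 150 70 q - q ^ 2 * theta_prod 150 100 q + q ^ 10 * theta_prod 150 130 q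
      + q ^ 14 * theta_prod 150 10 q - q ^ 4 * theta_prod 150 40 q"
    unfolding residues using T[of 70] T[of 100] T[of 130] has_sum_shift_int[OF T[of 10]]
      has_sum_shift_int[OF T[of 40]]
    by (simp add: infsumI infsum_cmult_right' infsum_uminus)
  finally show ?thesis
    by (simp add: algebra_simps flip: power_add)
qed

section \<open>Products of geometric series\<close>

lemma sums_of_stabilizing_terms:
  fixes a :: "nat \<Rightarrow> nat \<Rightarrow> real"
  assumes sums: "\<And>M. a M sums s M" and nonneg: "\<And>M n. 0 \<le> a M n"
    and le: "\<And>M n. a M n \<le> b n" and stable: "\<And>M n. n < M \<Longrightarrow> a M n = b n"
    and lim: "s \<longlonglongrightarrow> S" and bound: "\<And>M. s M \<le> S"
  shows "b sums S"
proof -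
  have b_nonneg: "0 \<le> b n" for n
    using nonneg[of "Suc n" n] stable[of n "Suc n"] by simp
  have partial: "(\<Sum>n<K. b n) \<le> S" for K
  proof -
    have "(\<Sum>n<K. b n) = (\<Sum>n<K. a K n)"
      using stable by simp
    also have "\<dots> \<le> suminf (a K)"
      using sums[of K] nonneg by (intro sum_le_suminf) (auto simp: sums_iff)
    also have "\<dots> = s K"
      using sums[of K] by (simp add: sums_iff)
    finally show ?thesis
      using bound[of K] by simp
  qed
  have "summable b"
    using b_nonneg partial by (rule summableI_nonneg_bounded)
  have lower: "s M \<le> suminf b" for M
    using le by (intro sums_le[OF _ sums[of M] summable_sums[OF \<open>summable b\<close>]]) simp
  have "S \<le> suminf b"
    using lower by (intro LIMSEQ_le_const2[OF lim]) blast
  moreover have "suminf b \<le> S"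
    using \<open>summable b\<close> partial by (rule suminf_le_const)
  ultimately show ?thesis
    using \<open>summable b\<close> by (simp add: sums_iff)
qed

definition fps_nonneg :: "real fps \<Rightarrow> bool" where
  "fps_nonneg F \<longleftrightarrow> (\<forall>n. 0 \<le> fps_nth F n)"

definition fps_sums :: "real fps \<Rightarrow> real \<Rightarrow> real \<Rightarrow> bool" where
  "fps_sums F x s \<longleftrightarrow> (\<lambda>n. fps_nth F n * x ^ n) sums s"

lemma fps_nonneg_one: "fps_nonneg 1"
  by (simp add: fps_nonneg_def)

lemma fps_nonneg_mult: "fps_nonneg F \<Longrightarrow> fps_nonneg G \<Longrightarrow> fps_nonneg (F * G)"
  unfolding fps_nonneg_def fps_mult_nth by (auto intro!: sum_nonneg)

lemma fps_nonneg_power: "fps_nonneg F \<Longrightarrow> fps_nonneg (F ^ m)"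
  by (induction m) (simp_all add: fps_nonneg_one fps_nonneg_mult)

lemma fps_nonneg_prod: "(\<And>k. k \<in> A \<Longrightarrow> fps_nonneg (F k)) \<Longrightarrow> fps_nonneg (\<Prod>k\<in>A. F k)"
  by (induction A rule: infinite_finite_induct) (simp_all add: fps_nonneg_one fps_nonneg_mult)

lemma fps_nth_mult_ge:
  assumes "fps_nonneg F" "fps_nonneg G"
  shows "fps_nth F n * fps_nth G 0 \<le> fps_nth (F * G) n"
proof -
  have "fps_nth F n * fps_nth G (n - n) \<le> (\<Sum>i=0..n. fps_nth F i * fps_nth G (n - i))"
    using assms unfolding fps_nonneg_def by (intro member_le_sum) auto
  then show ?thesis
    by (simp add: fps_mult_nth)
qed

lemma fps_sums_mult:
  assumes "fps_nonneg F" "fps_nonneg G" "0 \<le> x" "fps_sums F x s" "fps_sums G x t"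
  shows "fps_sums (F * G) x (s * t)"
proof -
  have "summable (\<lambda>k. norm (fps_nth F k * x ^ k))" "summable (\<lambda>k. norm (fps_nth G k * x ^ k))"
    using assms unfolding fps_sums_def fps_nonneg_def by (simp_all add: sums_iff)
  from Cauchy_product_sums[OF this]
  have "(\<lambda>k. \<Sum>i\<le>k. fps_nth F i * x ^ i * (fps_nth G (k - i) * x ^ (k - i))) sums (s * t)"
    using assms(4,5) unfolding fps_sums_def by (simp add: sums_iff)
  moreover have "(\<Sum>i\<le>k. fps_nth F i * x ^ i * (fps_nth G (k - i) * x ^ (k - i)))
        = fps_nth (F * G) k * x ^ k"
    for k
  proof -
    have "fps_nth F i * x ^ i * (fps_nth G (k - i) * x ^ (k - i))
        = fps_nth F i * fps_nth G (k - i) * x ^ k"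
      if "i \<le> k" for i
    proof -
      have "fps_nth F i * x ^ i * (fps_nth G (k - i) * x ^ (k - i))
          = fps_nth F i * fps_nth G (k - i) * (x ^ i * x ^ (k - i))"
        by (simp only: mult_ac)
      then show ?thesis
        using that by (simp flip: power_add)
    qed
    then have "(\<Sum>i\<le>k. fps_nth F i * x ^ i * (fps_nth G (k - i) * x ^ (k - i)))
        = (\<Sum>i\<le>k. fps_nth F i * fps_nth G (k - i) * x ^ k)"
      by (intro sum.cong) simp_all
    then show ?thesis
      by (simp add: fps_mult_nth atLeast0AtMost sum_distrib_right)
  qed
  ultimately show ?thesis
    unfolding fps_sums_def by simp
qed

lemma fps_sums_one: "fps_sums 1 x 1"
proof -
  have "(\<lambda>n. fps_nth 1 n * x ^ n) = (\<lambda>n. if n = 0 then 1 else 0)"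
    by (simp add: fun_eq_iff)
  then show ?thesis
    unfolding fps_sums_def using sums_single[of 0 "\<lambda>_. 1 :: real"] by simp
qed

lemma fps_sums_power: "fps_nonneg F \<Longrightarrow> 0 \<le> x \<Longrightarrow> fps_sums F x s \<Longrightarrow> fps_sums (F ^ m) x (s ^ m)"
  by (induction m) (auto intro: fps_sums_mult fps_nonneg_power fps_sums_one)

definition fps_geom :: "nat \<Rightarrow> real fps" where
  "fps_geom k = Abs_fps (\<lambda>n. if k dvd n then 1 else 0)"

lemma fps_geom_nth: "fps_nth (fps_geom k) n = (if k dvd n then 1 else 0)"
  by (simp add: fps_geom_def)

lemma fps_nonneg_geom: "fps_nonneg (fps_geom k)"
  by (simp add: fps_nonneg_def fps_geom_nth)

lemma fps_sums_geom:
  assumes "0 < k" "0 \<le> x" "x < 1"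
  shows "fps_sums (fps_geom k) x (1 / (1 - x ^ k))"
proof -
  have "norm (x ^ k) < 1"
    using assms by (simp add: power_less_one_iff abs_of_nonneg)
  then have "(\<lambda>j. fps_nth (fps_geom k) (k * j) * x ^ (k * j)) sums (1 / (1 - x ^ k))"
    using geometric_sums[of "x ^ k"] by (simp add: fps_geom_nth power_mult)
  moreover have "strict_mono (\<lambda>j. k * j)"
    using assms by (auto simp: strict_mono_def)
  moreover have "fps_nth (fps_geom k) n * x ^ n = 0" if "n \<notin> range (\<lambda>j. k * j)" for n
    using that by (auto simp: fps_geom_nth dvd_def)
  ultimately show ?thesis
    unfolding fps_sums_def by (subst (asm) sums_mono_reindex)
qed

lemma fps_sums_geom_power:
  assumes "0 < k" "0 \<le> x" "x < 1"
  shows "fps_sums (fps_geom k ^ m) x (exp (real m * ln_geom (x ^ k)))"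
proof -
  have "x ^ k < 1"
    using assms by (simp add: power_less_one_iff)
  then have "exp (real m * ln_geom (x ^ k)) = (1 / (1 - x ^ k)) ^ m"
    by (simp add: exp_of_nat_mult exp_ln_geom)
  then show ?thesis
    using assms by (simp add: fps_sums_power fps_sums_geom fps_nonneg_geom)
qed

lemma fps_nth_mult_geom_power_low:
  assumes "n < k"
  shows "fps_nth (F * fps_geom k ^ m) n = fps_nth F n"
proof (induction m)
  case (Suc m)
  have geom: "fps_nth (fps_geom k) (n - i) = (if i = n then 1 else 0)" if "i \<le> n" for i
    using that assms by (auto simp: fps_geom_nth dest: dvd_imp_le)
  have "fps_nth (F * fps_geom k ^ Suc m) n = fps_nth (F * fps_geom k ^ m * fps_geom k) n"
    by (simp only: power_Suc2 mult.assoc)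
  also have "\<dots> = (\<Sum>i=0..n. fps_nth (F * fps_geom k ^ m) i * fps_nth (fps_geom k) (n - i))"
    by (rule fps_mult_nth)
  also have "\<dots> = (\<Sum>i=0..n. if i = n then fps_nth (F * fps_geom k ^ m) i else 0)"
    by (intro sum.cong) (simp_all add: geom)
  also have "\<dots> = fps_nth (F * fps_geom k ^ m) n"
    by simp
  finally show ?case
    using Suc.IH by simp
qed simp

definition fps_dvd_support :: "nat \<Rightarrow> real fps \<Rightarrow> bool" where
  "fps_dvd_support d F \<longleftrightarrow> (\<forall>n. \<not> d dvd n \<longrightarrow> fps_nth F n = 0)"

lemma fps_dvd_support_one: "fps_dvd_support d 1"
  by (simp add: fps_dvd_support_def)

lemma fps_dvd_support_mult:
  assumes "fps_dvd_support d F" "fps_dvd_support d G"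
  shows "fps_dvd_support d (F * G)"
  unfolding fps_dvd_support_def
proof (intro allI impI)
  fix n
  assume n: "\<not> d dvd n"
  have zero: "fps_nth F i * fps_nth G (n - i) = 0" if "i \<le> n" for i
  proof (cases "d dvd i")
    case True
    with n that have "\<not> d dvd (n - i)"
      by (metis dvd_add le_add_diff_inverse)
    then show ?thesis
      using assms(2) by (simp add: fps_dvd_support_def)
  qed (use assms(1) in \<open>simp add: fps_dvd_support_def\<close>)
  then show "fps_nth (F * G) n = 0"
    unfolding fps_mult_nth by (intro sum.neutral) (simp add: zero)
qed

lemma fps_dvd_support_power: "fps_dvd_support d F \<Longrightarrow> fps_dvd_support d (F ^ m)"
  by (induction m) (simp_all add: fps_dvd_support_one fps_dvd_support_mult)

lemma fps_dvd_support_geom: "d dvd k \<Longrightarrow> fps_dvd_support d (fps_geom k)"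
  unfolding fps_dvd_support_def fps_geom_nth by (auto intro: dvd_trans)

definition geom_prod :: "(nat \<Rightarrow> nat) \<Rightarrow> nat \<Rightarrow> real fps" where
  "geom_prod \<mu> M = (\<Prod>k<M. fps_geom k ^ \<mu> k)"

lemma geom_prod_Suc: "geom_prod \<mu> (Suc M) = geom_prod \<mu> M * fps_geom M ^ \<mu> M"
  by (simp add: geom_prod_def)

lemma fps_nonneg_geom_prod: "fps_nonneg (geom_prod \<mu> M)"
  unfolding geom_prod_def by (intro fps_nonneg_prod fps_nonneg_power fps_nonneg_geom)

lemma fps_sums_geom_prod:
  assumes "\<mu> 0 = 0" "0 \<le> x" "x < 1"
  shows "fps_sums (geom_prod \<mu> M) x (exp (\<Sum>k<M. real (\<mu> k) * ln_geom (x ^ k)))"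
proof (induction M)
  case (Suc M)
  have "fps_sums (fps_geom M ^ \<mu> M) x (exp (real (\<mu> M) * ln_geom (x ^ M)))"
    using assms by (cases "M = 0") (simp_all add: fps_sums_one fps_sums_geom_power)
  then show ?case
    unfolding geom_prod_Suc sum.lessThan_Suc exp_add using assms(2)
    by (intro fps_sums_mult Suc.IH fps_nonneg_geom_prod fps_nonneg_power fps_nonneg_geom)
qed (simp add: geom_prod_def fps_sums_one)

lemma geom_prod_nth_stable: "n < M \<Longrightarrow> fps_nth (geom_prod \<mu> M) n = fps_nth (geom_prod \<mu> (Suc n)) n"
proof (induction M)
  case (Suc M)
  show ?case
  proof (cases "n < M")
    case True
    then have "fps_nth (geom_prod \<mu> (Suc M)) n = fps_nth (geom_prod \<mu> M) n"
      by (simp only: geom_prod_Suc fps_nth_mult_geom_power_low)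
    then show ?thesis
      using Suc.IH[OF True] by simp
  next
    case False
    with Suc.prems have "n = M"
      by simp
    then show ?thesis
      by simp
  qed
qed simp

lemma fps_nth_geom_power_0: "fps_nth (fps_geom k ^ m) 0 = 1"
  by (induction m) (simp_all add: fps_geom_nth)

lemma geom_prod_nth_mono:
  assumes "M \<le> M'"
  shows "fps_nth (geom_prod \<mu> M) n \<le> fps_nth (geom_prod \<mu> M') n"
proof -
  have "fps_nth (geom_prod \<mu> M) n \<le> fps_nth (geom_prod \<mu> (Suc M)) n" for M
  proof -
    have "fps_nth (fps_geom M ^ \<mu> M) 0 = 1"
      by (rule fps_nth_geom_power_0)
    then show ?thesis
      using fps_nth_mult_ge[OF fps_nonneg_geom_prod fps_nonneg_power[OF fps_nonneg_geom]]
      by (metis geom_prod_Suc mult.right_neutral)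
  qed
  then show ?thesis
    using assms by (rule lift_Suc_mono_le)
qed

lemma geom_prod_nth_eq_0:
  assumes "\<And>k. \<mu> k \<noteq> 0 \<Longrightarrow> d dvd k" "\<not> d dvd n"
  shows "fps_nth (geom_prod \<mu> M) n = 0"
proof -
  have "fps_dvd_support d (fps_geom k ^ \<mu> k)" for k
    using assms(1) by (cases "\<mu> k = 0")
      (simp_all add: fps_dvd_support_one fps_dvd_support_power fps_dvd_support_geom)
  then have "fps_dvd_support d (geom_prod \<mu> M)"
    unfolding geom_prod_def
    by (induction M) (simp_all add: fps_dvd_support_one fps_dvd_support_mult)
  then show ?thesis
    using assms(2) by (simp add: fps_dvd_support_def)
qed

lemma geom_prod_nth_multiple_pos:
  assumes "0 < \<mu> d" "d < M"
  shows "0 < fps_nth (geom_prod \<mu> M) (d * j)"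
proof -
  define R where "R = fps_geom d ^ (\<mu> d - 1) * (\<Prod>k\<in>{..<M} - {d}. fps_geom k ^ \<mu> k)"
  have "geom_prod \<mu> M = fps_geom d ^ \<mu> d * (\<Prod>k\<in>{..<M} - {d}. fps_geom k ^ \<mu> k)"
    unfolding geom_prod_def using assms by (subst prod.remove[of _ d]) auto
  also have "fps_geom d ^ \<mu> d = fps_geom d * fps_geom d ^ (\<mu> d - 1)"
    using assms by (simp flip: power_Suc)
  finally have "geom_prod \<mu> M = fps_geom d * R"
    by (simp add: R_def mult.assoc)
  moreover have "fps_nonneg R"
    unfolding R_def by (intro fps_nonneg_mult fps_nonneg_power fps_nonneg_geom fps_nonneg_prod)
  moreover have "fps_nth R 0 = 1"
  proof -
    have "fps_nth (\<Prod>k\<in>A. fps_geom k ^ \<mu> k) 0 = 1" if "finite A" for A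
      using that by (induction A rule: finite_induct) (simp_all add: fps_nth_geom_power_0)
    then show ?thesis
      by (simp add: R_def fps_nth_geom_power_0)
  qed
  ultimately show ?thesis
    using fps_nth_mult_ge[OF fps_nonneg_geom, of R d "d * j"] by (simp add: fps_geom_nth)
qed

definition pos_on_multiples :: "nat \<Rightarrow> (nat \<Rightarrow> real) \<Rightarrow> bool" where
  "pos_on_multiples d c \<longleftrightarrow> (\<forall>n. \<not> d dvd n \<longrightarrow> c n = 0) \<and> (\<forall>n. d dvd n \<longrightarrow> 0 < c n)"

lemma summable_ln_geom_power:
  assumes "0 \<le> x" "x < 1"
  shows "summable (\<lambda>k. ln_geom (x ^ k))"
proof -
  have "summable (\<lambda>k. ln_geom (x * x ^ k))"
    using assms by (intro summable_ln_geom_geometric) auto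
  then show ?thesis
    by (subst summable_Suc_iff[symmetric]) simp
qed

definition geom_prod_coeff :: "(nat \<Rightarrow> nat) \<Rightarrow> nat \<Rightarrow> real" where
  "geom_prod_coeff \<mu> n = fps_nth (geom_prod \<mu> (Suc n)) n"

lemma geom_prod_nth_eq_coeff: "n < M \<Longrightarrow> fps_nth (geom_prod \<mu> M) n = geom_prod_coeff \<mu> n"
  unfolding geom_prod_coeff_def by (rule geom_prod_nth_stable)

lemma geom_prod_nth_le_coeff: "fps_nth (geom_prod \<mu> M) n \<le> geom_prod_coeff \<mu> n"
  using geom_prod_nth_eq_coeff[of n M] geom_prod_nth_mono[of M "Suc n" \<mu> n]
  by (cases "n < M") (auto simp: geom_prod_coeff_def)

lemma pos_on_multiples_geom_prod_coeff:
  assumes "\<mu> 0 = 0" "\<And>k. \<mu> k \<noteq> 0 \<Longrightarrow> d dvd k" "0 < \<mu> d"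
  shows "pos_on_multiples d (geom_prod_coeff \<mu>)"
  unfolding pos_on_multiples_def
proof (intro conjI allI impI)
  show "geom_prod_coeff \<mu> n = 0" if "\<not> d dvd n" for n
    unfolding geom_prod_coeff_def using assms(2) that by (rule geom_prod_nth_eq_0)
  show "0 < geom_prod_coeff \<mu> n" if "d dvd n" for n
  proof -
    from that obtain j where "n = d * j"
      by blast
    moreover have "d \<noteq> 0"
      using assms(1,3) by (metis less_irrefl)
    ultimately show ?thesis
      using geom_prod_nth_eq_coeff[of n "Suc (n + d)" \<mu>]
        geom_prod_nth_multiple_pos[of \<mu> d "Suc (n + d)" j]
        assms(3)
      by simp
  qed
qed

lemma sums_geom_prod_coeff:
  assumes "\<mu> 0 = 0" "\<And>k. \<mu> k \<le> B" "0 \<le> x" "x < 1"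
  shows "(\<lambda>n. geom_prod_coeff \<mu> n * x ^ n) sums exp (\<Sum>k. real (\<mu> k) * ln_geom (x ^ k))"
proof -
  have nonneg: "0 \<le> real (\<mu> k) * ln_geom (x ^ k)" for k
    using assms by (cases k) (auto intro!: ln_geom_nonneg mult_nonneg_nonneg mult_power_less_one)
  have "summable (\<lambda>k. real (\<mu> k) * ln_geom (x ^ k))"
  proof (rule summable_comparison_test'[OF summable_mult[OF summable_ln_geom_power[OF assms(3,4)],
     of "real B"]])
    fix k :: nat
    assume "1 \<le> k"
    then have "0 \<le> ln_geom (x ^ k)"
      using assms by (intro ln_geom_nonneg) (auto simp: power_less_one_iff)
    then show "norm (real (\<mu> k) * ln_geom (x ^ k)) \<le> real B * ln_geom (x ^ k)"
      using nonneg[of k] assms(2)[of k] by (simp add: mult_right_mono)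
  qed
  show ?thesis
  proof (rule sums_of_stabilizing_terms)
    show "(\<lambda>n. fps_nth (geom_prod \<mu> M) n * x ^ n)
        sums exp (\<Sum>k<M. real (\<mu> k) * ln_geom (x ^ k))" for M
      using fps_sums_geom_prod[of \<mu> x M] assms by (simp add: fps_sums_def)
    show "0 \<le> fps_nth (geom_prod \<mu> M) n * x ^ n" for M n
      using fps_nonneg_geom_prod assms by (simp add: fps_nonneg_def)
    show "fps_nth (geom_prod \<mu> M) n * x ^ n \<le> geom_prod_coeff \<mu> n * x ^ n" for M n
      using geom_prod_nth_le_coeff assms by (simp add: mult_right_mono)
    show "fps_nth (geom_prod \<mu> M) n * x ^ n = geom_prod_coeff \<mu> n * x ^ n" if "n < M" for M n
      using geom_prod_nth_eq_coeff[OF that] by simp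
    show "(\<lambda>M. exp (\<Sum>k<M. real (\<mu> k) * ln_geom (x ^ k))) \<longlonglongrightarrow> exp (\<Sum>k. real (\<mu> k) * ln_geom (x ^ k))"
      by (intro tendsto_exp summable_LIMSEQ \<open>summable _\<close>)
    show "exp (\<Sum>k<M. real (\<mu> k) * ln_geom (x ^ k)) \<le> exp (\<Sum>k. real (\<mu> k) * ln_geom (x ^ k))" for M
      using nonneg by (simp add: sum_le_suminf \<open>summable _\<close>)
  qed
qed

theorem exp_ln_geom_series_coeffs:
  assumes "\<mu> 0 = 0" "\<And>k. \<mu> k \<le> B" "\<And>k. \<mu> k \<noteq> 0 \<Longrightarrow> d dvd k" "0 < \<mu> d"
  shows "\<exists>c. pos_on_multiples d c \<and>
    (\<forall>x. 0 \<le> x \<longrightarrow> x < 1 \<longrightarrow> (\<lambda>n. c n * x ^ n) sums exp (\<Sum>k. real (\<mu> k) * ln_geom (x ^ k)))"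
  using pos_on_multiples_geom_prod_coeff[OF assms(1,3,4)] sums_geom_prod_coeff[of \<mu> B] assms(1,2)
  by blast

section \<open>The 5-dissection of the quotient\<close>

definition ln_recip_qpoch :: "nat \<Rightarrow> nat \<Rightarrow> real \<Rightarrow> real" where
  "ln_recip_qpoch a N x = (\<Sum>i. ln_geom (x ^ (a + N * i)))"

lemma ln_recip_qpoch_sums:
  assumes "0 < a" "0 < N" "0 \<le> x" "x < 1"
  shows "(\<lambda>i. ln_geom (x ^ (a + N * i))) sums ln_recip_qpoch a N x"
    and "((\<lambda>i. ln_geom (x ^ (a + N * i))) has_sum ln_recip_qpoch a N x) UNIV"
proof -
  have "x ^ a < 1" "x ^ N < 1"
    using assms by (simp_all add: power_less_one_iff)
  then have "summable (\<lambda>i. ln_geom (x ^ a * (x ^ N) ^ i))"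
    using assms by (intro summable_ln_geom_geometric) auto
  then have summable: "summable (\<lambda>i. ln_geom (x ^ (a + N * i)))"
    by (simp add: power_add power_mult)
  then show sums: "(\<lambda>i. ln_geom (x ^ (a + N * i))) sums ln_recip_qpoch a N x"
    unfolding ln_recip_qpoch_def by (rule summable_sums)
  have "0 \<le> ln_geom (x ^ (a + N * i))" for i
    using assms by (intro ln_geom_nonneg) (auto simp: power_less_one_iff)
  then show "((\<lambda>i. ln_geom (x ^ (a + N * i))) has_sum ln_recip_qpoch a N x) UNIV"
    using summable sums by (intro norm_summable_imp_has_sum) simp_all
qed

lemma qpoch_inf_power_eq_exp:
  assumes "0 < a" "0 < N" "0 \<le> x" "x < 1"
  shows "qpoch_inf (x ^ a) (x ^ N) = exp (- ln_recip_qpoch a N x)"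
  using assms qpoch_inf_eq_exp[of "x ^ a" "x ^ N"]
  by (simp add: ln_recip_qpoch_def power_less_one_iff power_add power_mult)

lemma ln_recip_qpoch_split:
  assumes "0 < d" "0 < a" "0 < N" "0 \<le> x" "x < 1"
  shows "ln_recip_qpoch a N x = (\<Sum>r<d. ln_recip_qpoch (a + N * r) (N * d) x)"
proof -
  have "ln_recip_qpoch a N x = (\<Sum>r<d. \<Sum>\<^sub>\<infinity>m. ln_geom (x ^ (a + N * (d * m + r))))"
    using has_sum_residue_classes[OF ln_recip_qpoch_sums(2)[OF assms(2-5)]
      bij_betw_nat_residues[OF assms(1)]]
    by simp
  also have "\<dots> = (\<Sum>r<d. ln_recip_qpoch (a + N * r) (N * d) x)"
  proof (intro sum.cong refl infsumI)
    fix r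
    show "((\<lambda>m. ln_geom (x ^ (a + N * (d * m + r))))
        has_sum ln_recip_qpoch (a + N * r) (N * d) x) UNIV"
      using ln_recip_qpoch_sums(2)[of "a + N * r" "N * d" x] assms by (simp add: algebra_simps)
  qed
  finally show ?thesis .
qed

lemma ln_recip_qpoch_sums_indicator:
  assumes "0 < a" "0 < N" "0 \<le> x" "x < 1"
  shows "(\<lambda>k. of_bool (a \<le> k \<and> N dvd k - a) * ln_geom (x ^ k)) sums ln_recip_qpoch a N x"
proof -
  have mono: "strict_mono (\<lambda>i. a + N * i)"
    using assms by (auto simp: strict_mono_def)
  have zero: "of_bool (a \<le> k \<and> N dvd k - a) * ln_geom (x ^ k) = 0"
    if "k \<notin> range (\<lambda>i. a + N * i)" for k
    using that by (auto simp: dvd_def image_iff) (metis le_add_diff_inverse)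
  show ?thesis
    using ln_recip_qpoch_sums(1)[OF assms]
      sums_mono_reindex[OF mono, of "\<lambda>k. of_bool (a \<le> k \<and> N dvd k - a) * ln_geom (x ^ k)", OF zero]
    by simp
qed

lemma ln_recip_qpoch_list_sums:
  assumes "\<forall>(a, N) \<in> set L. 0 < a \<and> 0 < N" "0 \<le> x" "x < 1"
  shows "(\<lambda>k. real (length (filter (\<lambda>(a, N). a \<le> k \<and> N dvd k - a) L)) * ln_geom (x ^ k))
    sums (\<Sum>(a, N)\<leftarrow>L. ln_recip_qpoch a N x)"
  using assms(1)
proof (induction L)
  case (Cons p L)
  obtain a N where p: "p = (a, N)"
    by fastforce
  have "(\<lambda>k. of_bool (a \<le> k \<and> N dvd k - a) * ln_geom (x ^ k)
      + real (length (filter (\<lambda>(a, N). a \<le> k \<and> N dvd k - a) L)) * ln_geom (x ^ k))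
    sums (ln_recip_qpoch a N x + (\<Sum>(a, N)\<leftarrow>L. ln_recip_qpoch a N x))"
    using Cons assms(2,3) p by (intro sums_add ln_recip_qpoch_sums_indicator) auto
  moreover have "real (length (filter (\<lambda>(a, N). a \<le> k \<and> N dvd k - a) (p # L))) * ln_geom (x ^ k)
      = of_bool (a \<le> k \<and> N dvd k - a) * ln_geom (x ^ k)
        + real (length (filter (\<lambda>(a, N). a \<le> k \<and> N dvd k - a) L)) * ln_geom (x ^ k)" for k
    by (simp add: p distrib_right)
  ultimately show ?case
    by (simp add: p)
qed simp

definition recip_qpochs :: "(nat \<times> nat) list \<Rightarrow> real \<Rightarrow> real" where
  "recip_qpochs L x = exp (\<Sum>(a, N)\<leftarrow>L. ln_recip_qpoch a N x)"

theorem recip_qpochs_coeffs: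
  assumes "\<forall>(a, N) \<in> set L. 0 < a \<and> 0 < N \<and> d dvd a \<and> d dvd N" "(d, N) \<in> set L"
  shows "\<exists>c. pos_on_multiples d c \<and>
    (\<forall>x. 0 \<le> x \<longrightarrow> x < 1 \<longrightarrow> (\<lambda>n. c n * x ^ n) sums recip_qpochs L x)"
proof -
  define \<mu> where "\<mu> k = length (filter (\<lambda>(a, N). a \<le> k \<and> N dvd k - a) L)" for k
  have mu0: "\<mu> 0 = 0"
    using assms(1) unfolding \<mu>_def by (force simp: filter_empty_conv)
  have mu_le: "\<mu> k \<le> length L" for k
    unfolding \<mu>_def by (rule length_filter_le)
  have mu_dvd: "d dvd k" if "\<mu> k \<noteq> 0" for k
  proof -
    have "filter (\<lambda>(a, N). a \<le> k \<and> N dvd k - a) L \<noteq> []"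
      using that unfolding \<mu>_def by auto
    then obtain p where "p \<in> set (filter (\<lambda>(a, N). a \<le> k \<and> N dvd k - a) L)"
      by (metis ex_in_conv set_empty)
    then have "p \<in> set L" "(\<lambda>(a, N). a \<le> k \<and> N dvd k - a) p"
      by simp_all
    then obtain a N' where "(a, N') \<in> set L" "a \<le> k" "N' dvd k - a"
      by (cases p) auto
    with assms(1) have "d dvd a" "d dvd k - a"
      by (auto intro: dvd_trans)
    with \<open>a \<le> k\<close> show ?thesis
      by (metis dvd_add le_add_diff_inverse)
  qed
  have mu_d: "0 < \<mu> d"
    using assms(2) unfolding \<mu>_def by (force simp: filter_empty_conv)
  obtain c where "pos_on_multiples d c"
    and c: "\<And>x. 0 \<le> x \<Longrightarrow> x < 1 \<Longrightarrow> (\<lambda>n. c n * x ^ n) sums exp (\<Sum>k. real (\<mu> k) * ln_geom (x ^ k))"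
    using exp_ln_geom_series_coeffs[of \<mu> "length L" d, OF mu0 mu_le mu_dvd mu_d] by blast
  have "\<forall>(a, N) \<in> set L. 0 < a \<and> 0 < N"
    using assms(1) by auto
  then have "(\<Sum>k. real (\<mu> k) * ln_geom (x ^ k)) = (\<Sum>(a, N)\<leftarrow>L. ln_recip_qpoch a N x)"
    if "0 \<le> x" "x < 1" for x
    using ln_recip_qpoch_list_sums[OF _ that, of L] unfolding \<mu>_def by (simp add: sums_iff)
  with \<open>pos_on_multiples d c\<close> c show ?thesis
    by (auto simp: recip_qpochs_def)
qed

text \<open>Since (q^5;q^5)_inf = prod_{r=1..30} (q^(5r);q^150)_inf, dividing a product of q-Pochhammer
  symbols of modulus 150 by it leaves the reciprocals of the factors indexed by the list below.\<close>

definition progressions_150_except :: "nat list \<Rightarrow> (nat \<times> nat) list" where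
  "progressions_150_except E = map (\<lambda>r. (5 * r, 150)) (filter (\<lambda>r. r \<notin> set E) [1..<30])"

lemma sum_progressions_150_except:
  assumes "0 \<le> x" "x < 1" "set E \<subseteq> {1..<30}" "distinct E"
  shows "(\<Sum>(a, N)\<leftarrow>progressions_150_except E. ln_recip_qpoch a N x)
    = ln_recip_qpoch 5 5 x - ln_recip_qpoch 150 150 x - (\<Sum>r\<leftarrow>E. ln_recip_qpoch (5 * r) 150 x)"
proof -
  define f where "f r = ln_recip_qpoch (5 * r) 150 x" for r
  have "ln_recip_qpoch 5 5 x = (\<Sum>r<30. f (Suc r))"
    using ln_recip_qpoch_split[of 30 5 5 x] assms(1,2) by (simp add: f_def algebra_simps)
  also have "\<dots> = (\<Sum>r\<in>{Suc 0..<Suc 30}. f r)"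
    by (simp only: lessThan_atLeast0 sum.shift_bounds_Suc_ivl)
  also have "\<dots> = (\<Sum>r\<in>{1..<30}. f r) + f 30"
    by (subst sum.atLeastLessThan_Suc) simp_all
  finally have total: "(\<Sum>r\<in>{1..<30}. f r) = ln_recip_qpoch 5 5 x - ln_recip_qpoch 150 150 x"
    by (simp add: f_def)
  have "(\<Sum>(a, N)\<leftarrow>progressions_150_except E. ln_recip_qpoch a N x) = (\<Sum>r\<in>{1..<30} - set E. f r)"
    by (simp add: progressions_150_except_def f_def comp_def sum_list_distinct_conv_sum_set
        set_diff_eq atLeastLessThan_def Collect_conj_eq)
  also have "\<dots> = (\<Sum>r\<in>{1..<30}. f r) - (\<Sum>r\<in>set E. f r)"
    using assms(3) by (intro sum_diff) auto
  also have "(\<Sum>r\<in>set E. f r) = (\<Sum>r\<leftarrow>E. f r)"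
    using assms(4) by (simp add: sum_list_distinct_conv_sum_set)
  finally show ?thesis
    unfolding total by (simp add: f_def)
qed

lemma ln_recip_qpoch_split3:
  assumes "0 < a" "0 < N" "0 \<le> x" "x < 1"
  shows "ln_recip_qpoch a N x
    = ln_recip_qpoch a (N * 3) x + ln_recip_qpoch (a + N) (N * 3) x
      + ln_recip_qpoch (a + 2 * N) (N * 3) x"
proof -
  have "{..<3::nat} = {0, 1, 2}"
    by auto
  then show ?thesis
    using ln_recip_qpoch_split[of 3 a N x] assms by (simp add: algebra_simps)
qed

lemma theta_prod_eq_exp:
  assumes "0 < j" "j < N" "0 \<le> q" "q < 1"
  shows "theta_prod N j q
    = exp (- (ln_recip_qpoch N N q + ln_recip_qpoch j N q + ln_recip_qpoch (N - j) N q))"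
  using assms by (simp add: theta_prod_def qpoch_inf_power_eq_exp
    exp_add exp_diff exp_minus field_simps)

lemma theta_prod_150_div_qpoch_5:
  assumes "0 \<le> q" "q < 1" "0 < r" "r < 30" "r \<noteq> 15"
  shows "theta_prod 150 (5 * r) q / qpoch_inf (q ^ 5) (q ^ 5)
    = recip_qpochs (progressions_150_except [r, 30 - r]) q"
proof -
  have "150 - 5 * r = 5 * (30 - r)"
    by simp
  then show ?thesis
    using assms theta_prod_eq_exp[of "5 * r" 150 q]
    by (simp add: recip_qpochs_def sum_progressions_150_except qpoch_inf_power_eq_exp
        exp_add exp_diff exp_minus field_simps)
qed

lemma theta_quotient_div_qpoch_5:
  assumes "0 \<le> q" "q < 1"
  shows "theta_prod 50 10 q * theta_prod 150 50 q / theta_prod 50 20 q / qpoch_inf (q ^ 5) (q ^ 5)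
    = recip_qpochs (progressions_150_except [2, 8, 10, 12, 18, 20, 22, 28]
        @ [(20, 50), (30, 50)]) q"
proof -
  have "ln_recip_qpoch 10 50 q = ln_recip_qpoch 10 150 q
        + ln_recip_qpoch 60 150 q + ln_recip_qpoch 110 150 q"
    and "ln_recip_qpoch 40 50 q = ln_recip_qpoch 40 150 q
        + ln_recip_qpoch 90 150 q + ln_recip_qpoch 140 150 q"
    using ln_recip_qpoch_split3[of 10 50 q] ln_recip_qpoch_split3[of 40 50 q] assms by simp_all
  then show ?thesis
    using assms
    by (simp add: recip_qpochs_def sum_progressions_150_except theta_prod_eq_exp
        qpoch_inf_power_eq_exp exp_add exp_diff exp_minus field_simps)
qed

theorem qpoch_ratio_dissection:
  assumes "0 < q" "q < 1"
  shows "qpoch_inf (q ^ 2) (q ^ 2) / qpoch_inf (q ^ 5) (q ^ 5)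
    = recip_qpochs (progressions_150_except [14, 16]) q
      - q ^ 2 * recip_qpochs (progressions_150_except [20, 10]) q
      + q ^ 10 * recip_qpochs (progressions_150_except [26, 4]) q
      - q ^ 4 * recip_qpochs (progressions_150_except [2, 8, 10, 12, 18, 20, 22, 28]
          @ [(20, 50), (30, 50)]) q"
proof -
  have q: "0 \<le> q" "q < 1"
    using assms by simp_all
  define D where "D = qpoch_inf (q ^ 5) (q ^ 5)"
  have "ln_recip_qpoch 2 2 q = ln_recip_qpoch 2 6 q + ln_recip_qpoch 4 6 q + ln_recip_qpoch 6 6 q"
    using ln_recip_qpoch_split3[of 2 2 q] q by simp
  then have "qpoch_inf (q ^ 2) (q ^ 2) = theta_prod 6 2 q"
    using q by (simp add: qpoch_inf_power_eq_exp theta_prod_eq_exp algebra_simps)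
  also have "\<dots> = theta_prod 150 70 q - q ^ 2 * theta_prod 150 100 q + q ^ 10 * theta_prod 150 130 q
      - q ^ 4 * (theta_prod 50 10 q * theta_prod 150 50 q / theta_prod 50 20 q)"
  proof -
    have "theta_prod 50 20 q \<noteq> 0"
      using q by (simp add: theta_prod_eq_exp)
    then have "theta_prod 150 40 q - q ^ 10 * theta_prod 150 10 q
        = theta_prod 50 10 q * theta_prod 150 50 q / theta_prod 50 20 q"
      using schroeter[OF assms] by (simp add: eq_divide_eq)
    then show ?thesis
      unfolding theta_dissection[OF assms] by simp
  qed
  finally have "qpoch_inf (q ^ 2) (q ^ 2) / D
      = theta_prod 150 (5 * 14) q / D - q ^ 2 * (theta_prod 150 (5 * 20) q / D)
        + q ^ 10 * (theta_prod 150 (5 * 26) q / D)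
        - q ^ 4 * (theta_prod 50 10 q * theta_prod 150 50 q / theta_prod 50 20 q / D)"
    by (simp add: diff_divide_distrib add_divide_distrib)
  then show ?thesis
    using q unfolding D_def
    by (simp only: theta_prod_150_div_qpoch_5 theta_quotient_div_qpoch_5) simp
qed

section \<open>Comparing coefficients\<close>

lemma powser_sums_zero_at_right_head:
  fixes e :: "nat \<Rightarrow> real"
  assumes "\<And>x. 0 < x \<Longrightarrow> x < 1 \<Longrightarrow> (\<lambda>k. e k * x ^ k) sums 0"
  shows "e 0 = 0"
proof -
  define g where "g x = (\<Sum>k. e k * x ^ k)" for x :: real
  have "summable (\<lambda>k. e k * (1 / 2) ^ k)"
    using assms[of "1 / 2"] by (simp add: sums_iff)
  then have "isCont g 0"
    unfolding g_def by (rule isCont_powser) simp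
  then have lim: "(g \<longlongrightarrow> g 0) (at_right 0)"
    unfolding isCont_def by (rule tendsto_within_subset) simp
  have "eventually (\<lambda>x. x \<in> {0<..<1}) (at_right (0 :: real))"
    by (rule eventually_at_right_real) simp
  then have "eventually (\<lambda>x. 0 = g x) (at_right 0)"
    by eventually_elim (use assms in \<open>simp add: g_def sums_iff\<close>)
  then have "(g \<longlongrightarrow> 0) (at_right 0)"
    by (rule Lim_transform_eventually[OF tendsto_const])
  then have "g 0 = 0"
    using tendsto_unique[OF _ lim] by simp
  then show ?thesis
    by (simp add: g_def)
qed

lemma powser_sums_zero_on_unit_interval:
  fixes e :: "nat \<Rightarrow> real"
  assumes "\<And>x. 0 < x \<Longrightarrow> x < 1 \<Longrightarrow> (\<lambda>k. e k * x ^ k) sums 0"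
  shows "e n = 0"
proof (induction n rule: less_induct)
  case (less n)
  have "(\<lambda>k. e (k + n) * x ^ k) sums 0" if "0 < x" "x < 1" for x
  proof -
    have "(\<lambda>k. e (k + n) * x ^ (k + n)) sums 0"
      using sums_zero_iff_shift[of n "\<lambda>k. e k * x ^ k" 0] less.IH assms[OF that] by simp
    then have "(\<lambda>k. e (k + n) * x ^ (k + n) / x ^ n) sums (0 / x ^ n)"
      by (rule sums_divide)
    then show ?thesis
      using that by (simp add: power_add)
  qed
  then show ?case
    using powser_sums_zero_at_right_head[of "\<lambda>k. e (k + n)"] by simp
qed

lemma powser_unique_on_unit_interval:
  fixes a b :: "nat \<Rightarrow> real"
  assumes "\<And>x. 0 < x \<Longrightarrow> x < 1 \<Longrightarrow> (\<lambda>n. a n * x ^ n) sums f x"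
    and "\<And>x. 0 < x \<Longrightarrow> x < 1 \<Longrightarrow> (\<lambda>n. b n * x ^ n) sums f x"
  shows "a = b"
proof
  fix n
  have "(\<lambda>k. (a k - b k) * x ^ k) sums 0" if "0 < x" "x < 1" for x
    using sums_diff[OF assms(1,2)[OF that]] by (simp add: algebra_simps)
  then show "a n = b n"
    using powser_sums_zero_on_unit_interval[of "\<lambda>k. a k - b k" n] by simp
qed

definition shift_coeffs :: "nat \<Rightarrow> (nat \<Rightarrow> real) \<Rightarrow> nat \<Rightarrow> real" where
  "shift_coeffs m c n = (if m \<le> n then c (n - m) else 0)"

lemma sums_shift_coeffs:
  assumes "(\<lambda>n. c n * x ^ n) sums S"
  shows "(\<lambda>n. shift_coeffs m c n * x ^ n) sums (x ^ m * S)"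
proof -
  have "(\<lambda>n. x ^ m * (c n * x ^ n)) sums (x ^ m * S)"
    using assms by (rule sums_mult)
  then have "(\<lambda>n. shift_coeffs m c (n + m) * x ^ (n + m)) sums (x ^ m * S)"
    by (simp add: shift_coeffs_def power_add algebra_simps)
  then show ?thesis
    by (subst (asm) sums_zero_iff_shift) (simp_all add: shift_coeffs_def)
qed

lemma shift_coeffs_pos_on_multiples:
  assumes "pos_on_multiples d c"
  shows "m \<le> n \<Longrightarrow> d dvd n - m \<Longrightarrow> 0 < shift_coeffs m c n"
    and "\<not> (m \<le> n \<and> d dvd n - m) \<Longrightarrow> shift_coeffs m c n = 0"
    and "0 \<le> shift_coeffs m c n"
proof -
  have "0 \<le> c k" for k
    using assms by (cases "d dvd k") (auto simp: pos_on_multiples_def less_imp_le)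
  then show "m \<le> n \<Longrightarrow> d dvd n - m \<Longrightarrow> 0 < shift_coeffs m c n"
    and "\<not> (m \<le> n \<and> d dvd n - m) \<Longrightarrow> shift_coeffs m c n = 0"
    and "0 \<le> shift_coeffs m c n"
    using assms by (auto simp: pos_on_multiples_def shift_coeffs_def)
qed

lemma qpoch_ratio_coeff_decomposition:
  "\<exists>c0 c1 c2 c4. pos_on_multiples 5 c0 \<and> pos_on_multiples 5 c1 \<and> pos_on_multiples 5 c2
    \<and> pos_on_multiples 5 c4 \<and> (\<forall>x. 0 < x \<longrightarrow> x < 1 \<longrightarrow>
      (\<lambda>n. (c0 n - shift_coeffs 2 c1 n + shift_coeffs 10 c2 n - shift_coeffs 4 c4 n) * x ^ n)
        sums (qpoch_inf (x ^ 2) (x ^ 2) / qpoch_inf (x ^ 5) (x ^ 5)))"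
proof -
  have coeffs: "\<exists>c. pos_on_multiples 5 c \<and>
      (\<forall>x. 0 \<le> x \<longrightarrow> x < 1 \<longrightarrow> (\<lambda>n. c n * x ^ n) sums recip_qpochs (progressions_150_except E @ L) x)"
    if "\<forall>(a, N) \<in> set L. 0 < a \<and> 0 < N \<and> 5 dvd a \<and> 5 dvd N" "1 \<notin> set E" for E L
    using that by (intro recip_qpochs_coeffs[where N = 150])
      (auto simp: progressions_150_except_def)
  obtain c0 c1 c2 c4
    where c: "pos_on_multiples 5 c0" "pos_on_multiples 5 c1" "pos_on_multiples 5 c2"
          "pos_on_multiples 5 c4"
    and s0: "\<And>x. 0 \<le> x \<Longrightarrow> x < 1 \<Longrightarrow>
      (\<lambda>n. c0 n * x ^ n) sums recip_qpochs (progressions_150_except [14, 16]) x"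
    and s1: "\<And>x. 0 \<le> x \<Longrightarrow> x < 1 \<Longrightarrow>
      (\<lambda>n. c1 n * x ^ n) sums recip_qpochs (progressions_150_except [20, 10]) x"
    and s2: "\<And>x. 0 \<le> x \<Longrightarrow> x < 1 \<Longrightarrow>
      (\<lambda>n. c2 n * x ^ n) sums recip_qpochs (progressions_150_except [26, 4]) x"
    and s4: "\<And>x. 0 \<le> x \<Longrightarrow> x < 1 \<Longrightarrow> (\<lambda>n. c4 n * x ^ n)
      sums recip_qpochs (progressions_150_except [2, 8, 10, 12, 18, 20, 22, 28]
          @ [(20, 50), (30, 50)]) x"
    using coeffs[of "[]" "[14, 16]"] coeffs[of "[]" "[20, 10]"] coeffs[of "[]" "[26, 4]"]
      coeffs[of "[(20, 50), (30, 50)]" "[2, 8, 10, 12, 18, 20, 22, 28]"]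
    by auto
  have "(\<lambda>n. (c0 n - shift_coeffs 2 c1 n + shift_coeffs 10 c2 n - shift_coeffs 4 c4 n) * x ^ n)
      sums (qpoch_inf (x ^ 2) (x ^ 2) / qpoch_inf (x ^ 5) (x ^ 5))" if "0 < x" "x < 1" for x
    unfolding qpoch_ratio_dissection[OF that] left_diff_distrib distrib_right
    using that s0 s1 s2 s4 by (intro sums_diff sums_add sums_shift_coeffs) simp_all
  with c show ?thesis
    by blast
qed

lemma dissection_sign_pattern:
  assumes "pos_on_multiples 5 c0" "pos_on_multiples 5 c1" "pos_on_multiples 5 c2"
    "pos_on_multiples 5 c4"
    and b: "b = c0 n - shift_coeffs 2 c1 n + shift_coeffs 10 c2 n - shift_coeffs 4 c4 n"
  shows "(n mod 5 = 0 \<longrightarrow> b > 0) \<and> (n mod 5 = 2 \<or> n mod 5 = 4 \<longrightarrow> b < 0)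
    \<and> (n mod 5 = 1 \<or> n mod 5 = 3 \<longrightarrow> b = 0)"
proof -
  note c1 = shift_coeffs_pos_on_multiples[OF assms(2), of 2 n]
    and c2 = shift_coeffs_pos_on_multiples[OF assms(3), of 10 n]
    and c4 = shift_coeffs_pos_on_multiples[OF assms(4), of 4 n]
  have c0: "5 dvd n \<Longrightarrow> 0 < c0 n" "\<not> 5 dvd n \<Longrightarrow> c0 n = 0"
    using assms(1) unfolding pos_on_multiples_def by blast+
  show ?thesis
  proof (intro conjI impI)
    assume "n mod 5 = 0"
    then have "5 dvd n" "\<not> (2 \<le> n \<and> 5 dvd n - 2)" "\<not> (4 \<le> n \<and> 5 dvd n - 4)"
      by presburger+
    with c0 c1 c2 c4 show "b > 0"
      unfolding b by fastforce
  next
    assume "n mod 5 = 2 \<or> n mod 5 = 4"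
    then have "\<not> 5 dvd n" "\<not> (10 \<le> n \<and> 5 dvd n - 10)"
      and "(2 \<le> n \<and> 5 dvd n - 2) \<or> (4 \<le> n \<and> 5 dvd n - 4)"
      by presburger+
    with c0 c1 c2 c4 show "b < 0"
      unfolding b by fastforce
  next
    assume "n mod 5 = 1 \<or> n mod 5 = 3"
    then have "\<not> 5 dvd n" "\<not> (2 \<le> n \<and> 5 dvd n - 2)" "\<not> (4 \<le> n \<and> 5 dvd n - 4)"
      "\<not> (10 \<le> n \<and> 5 dvd n - 10)"
      by presburger+
    with c0 c1 c2 c4 show "b = 0"
      unfolding b by simp
  qed
qed

theorem corollary1p2:
  fixes a :: "nat \<Rightarrow> real"
  assumes "\<And>q::real. \<bar>q\<bar> < 1 \<Longrightarrow>
     (\<lambda>n. a n * q ^ n) sums (qpoch_inf (q^2) (q^2) / qpoch_inf (q^5) (q^5))"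
  shows "\<forall>n. (n mod 5 = 0 \<longrightarrow> a n > 0)
            \<and> (n mod 5 = 2 \<or> n mod 5 = 4 \<longrightarrow> a n < 0)
            \<and> (n mod 5 = 1 \<or> n mod 5 = 3 \<longrightarrow> a n = 0)"
proof -
  obtain c0 c1 c2 c4
    where c: "pos_on_multiples 5 c0" "pos_on_multiples 5 c1" "pos_on_multiples 5 c2" "pos_on_multiples 5 c4"
    and sums: "\<And>x. 0 < x \<Longrightarrow> x < 1 \<Longrightarrow>
      (\<lambda>n. (c0 n - shift_coeffs 2 c1 n + shift_coeffs 10 c2 n - shift_coeffs 4 c4 n) * x ^ n)
        sums (qpoch_inf (x ^ 2) (x ^ 2) / qpoch_inf (x ^ 5) (x ^ 5))"
    using qpoch_ratio_coeff_decomposition by blast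
  have "a = (\<lambda>n. c0 n - shift_coeffs 2 c1 n + shift_coeffs 10 c2 n - shift_coeffs 4 c4 n)"
    using assms sums by (intro powser_unique_on_unit_interval) auto
  then show ?thesis
    using dissection_sign_pattern[OF c] by simp
qed

end
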